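(* Let $k,d\ge1$, let $x_1,\dots,x_d\in\mathbb T^k$ be free, let $M\ge1$ be an integer, let $A,B\subseteq\mathbb T^k$ be Baire measurable and let $\mathcal G=(A,B,E)$ with $E:=\{(a,b)\in A\times B: b-a\in V_M\}$, where $V_M:=\{\sum_{j=1}^dn_jx_j:n\in\mathbb Z^d,\|n\|_\infty\le M\}$. Let $i\ge1$, $r_i\in\mathbb N$, and let $A_i\subseteq A$, $B_i\subseteq B$ be Baire measurable sets such that at least one of $A_i,B_i$ is empty and $A_i\cup B_i$ is $(r_i+4M)$-sparse. Then for every Baire measurable $\mathcal G$-extendable matching $\mathcal M_{i-1}$ there is a Baire measurable matching $\mathcal M_i\supseteq\mathcal M_{i-1}$ in $\mathcal G$ such that: $\mathcal M_i^{-1}(B)\supseteq A_i$ and $\mathcal M_i(A)\supseteq B_i$; for every $u\in\mathbb T^k$, any two distinct pairs $(a,b),(x,y)\in(\mathcal M_i\setminus\mathcal M_{i-1})_u$ satisfy $\operatorname{dist}(\{a,b\},\{x,y\})>r_i+2M$; and for every $(a,b)\in\mathcal M_i\setminus\mathcal M_{i-1}$, the set $\mathcal M_{i-1}\cup\{(a,b)\}$ is a $\mathcal G$-extendable matching.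
   Context: $\mathbb T^k=\mathbb R^k/\mathbb Z^k\cong[0,1)^k$; vectors are free if no non-trivial integer combination is $0$ in $\mathbb T^k$. For $X\subseteq\mathbb T^k$, $X_u:=\{n\in\mathbb Z^d:u+\sum n_jx_j\in X\}$; $X$ is $r$-sparse if for each $u$ distinct elements of $X_u$ are at $L^\infty$-distance $>r$. A matching in $\mathcal G$ is a set of edges forming a partial injection $A\to B$; it is perfect if it is a bijection $A\to B$; a matching is $\mathcal G$-extendable if it is contained in some (not necessarily measurable) perfect matching of $\mathcal G$. A matching $\mathcal M$ is Baire measurable if for each $v\in V_M$ the set $\{a\in A:\mathcal M(a)-a=v\}$ is Baire measurable. For a set $\mathcal N$ of edges and $u\in\mathbb T^k$, $\mathcal N_u:=\{(n,m)\in\mathbb Z^d\times\mathbb Z^d:(u+\sum n_jx_j,\,u+\sum m_jx_j)\in\mathcal N\}$. Distance between finite sets $X,Y\subseteq\mathbb Z^d$ is $\min\{\|x-y\|_\infty:x\in X,y\in Y\}$. *)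

theory Defs
  imports "HOL-Analysis.Analysis"
begin

section \<open>The torus T^k, represented by [0,1)^k inside real^'k\<close>

definition tfrac :: "real^'k \<Rightarrow> real^'k" where
  "tfrac v = (\<chi> i. frac (v $ i))"

definition torus :: "(real^'k) set" where
  "torus = {v. \<forall>i. 0 \<le> v $ i \<and> v $ i < 1}"

definition tadd :: "real^'k \<Rightarrow> real^'k \<Rightarrow> real^'k" where
  "tadd u v = tfrac (u + v)"

definition tsub :: "real^'k \<Rightarrow> real^'k \<Rightarrow> real^'k" where
  "tsub u v = tfrac (u - v)"

text \<open>Quotient topology of T^k = R^k/Z^k on the representatives [0,1)^k.\<close>
definition torus_top :: "(real^'k) topology" where
  "torus_top = topology (\<lambda>U. U \<subseteq> torus \<and> open (tfrac -` U))"

lemma istopology_torus: "istopology (\<lambda>U::(real^'k) set. U \<subseteq> torus \<and> open (tfrac -` U))"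
  unfolding istopology_def
  by (auto simp: vimage_Union intro!: open_Union)

definition nowhere_dense_in :: "'a topology \<Rightarrow> 'a set \<Rightarrow> bool" where
  "nowhere_dense_in T S \<longleftrightarrow> S \<subseteq> topspace T \<and> T interior_of (T closure_of S) = {}"

definition meagre_in :: "'a topology \<Rightarrow> 'a set \<Rightarrow> bool" where
  "meagre_in T S \<longleftrightarrow> S \<subseteq> topspace T \<and>
     (\<exists>F. countable F \<and> (\<forall>N\<in>F. nowhere_dense_in T N) \<and> S \<subseteq> \<Union>F)"

definition baire_measurable_in :: "'a topology \<Rightarrow> 'a set \<Rightarrow> bool" where
  "baire_measurable_in T S \<longleftrightarrow> S \<subseteq> topspace T \<and>
     (\<exists>U. openin T U \<and> meagre_in T ((S - U) \<union> (U - S)))"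

definition lin :: "('d::finite \<Rightarrow> real^'k) \<Rightarrow> int^'d \<Rightarrow> real^'k" where
  "lin x n = tfrac (\<Sum>j\<in>UNIV. real_of_int (n $ j) *\<^sub>R x j)"

definition free_vecs :: "('d::finite \<Rightarrow> real^'k) \<Rightarrow> bool" where
  "free_vecs x \<longleftrightarrow> (\<forall>n::int^'d. lin x n = 0 \<longrightarrow> n = 0)"

definition linf_dist :: "int^'d::finite \<Rightarrow> int^'d \<Rightarrow> int" where
  "linf_dist n m = Max (range (\<lambda>j. \<bar>n $ j - m $ j\<bar>))"

definition VM :: "('d::finite \<Rightarrow> real^'k) \<Rightarrow> nat \<Rightarrow> (real^'k) set" where
  "VM x M = {lin x n | n. \<forall>j. \<bar>n $ j\<bar> \<le> int M}"

definition section_set :: "('d::finite \<Rightarrow> real^'k) \<Rightarrow> (real^'k) set \<Rightarrow> real^'k \<Rightarrow> (int^'d) set" where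
  "section_set x X u = {n. tadd u (lin x n) \<in> X}"

definition sparse :: "('d::finite \<Rightarrow> real^'k) \<Rightarrow> nat \<Rightarrow> (real^'k) set \<Rightarrow> bool" where
  "sparse x r X \<longleftrightarrow> (\<forall>u\<in>torus. \<forall>n\<in>section_set x X u. \<forall>m\<in>section_set x X u.
      n \<noteq> m \<longrightarrow> linf_dist n m > int r)"

definition edge_section :: "('d::finite \<Rightarrow> real^'k) \<Rightarrow> ((real^'k) \<times> (real^'k)) set \<Rightarrow> real^'k
    \<Rightarrow> ((int^'d) \<times> (int^'d)) set" where
  "edge_section x N u = {(n, m). (tadd u (lin x n), tadd u (lin x m)) \<in> N}"

definition edges :: "('d::finite \<Rightarrow> real^'k) \<Rightarrow> nat \<Rightarrow> (real^'k) set \<Rightarrow> (real^'k) set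
    \<Rightarrow> ((real^'k) \<times> (real^'k)) set" where
  "edges x M A B = {(a, b). a \<in> A \<and> b \<in> B \<and> tsub b a \<in> VM x M}"

definition is_matching :: "('d::finite \<Rightarrow> real^'k) \<Rightarrow> nat \<Rightarrow> (real^'k) set \<Rightarrow> (real^'k) set
    \<Rightarrow> ((real^'k) \<times> (real^'k)) set \<Rightarrow> bool" where
  "is_matching x M A B N \<longleftrightarrow> N \<subseteq> edges x M A B \<and>
     (\<forall>a b a' b'. (a, b) \<in> N \<longrightarrow> (a', b') \<in> N \<longrightarrow> (a = a' \<longleftrightarrow> b = b'))"

definition is_perfect_matching :: "('d::finite \<Rightarrow> real^'k) \<Rightarrow> nat \<Rightarrow> (real^'k) set \<Rightarrow> (real^'k) set
    \<Rightarrow> ((real^'k) \<times> (real^'k)) set \<Rightarrow> bool" where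
  "is_perfect_matching x M A B N \<longleftrightarrow> is_matching x M A B N \<and> Domain N = A \<and> Range N = B"

definition extendable :: "('d::finite \<Rightarrow> real^'k) \<Rightarrow> nat \<Rightarrow> (real^'k) set \<Rightarrow> (real^'k) set
    \<Rightarrow> ((real^'k) \<times> (real^'k)) set \<Rightarrow> bool" where
  "extendable x M A B N \<longleftrightarrow> is_matching x M A B N \<and>
     (\<exists>P. is_perfect_matching x M A B P \<and> N \<subseteq> P)"

definition baire_matching :: "('d::finite \<Rightarrow> real^'k) \<Rightarrow> nat \<Rightarrow> ((real^'k) \<times> (real^'k)) set \<Rightarrow> bool" where
  "baire_matching x M N \<longleftrightarrow>
     (\<forall>v\<in>VM x M. baire_measurable_in torus_top {a. \<exists>b. (a, b) \<in> N \<and> tsub b a = v})"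

end

theory Submission
  imports Defs
begin

text \<open>Reversing all edges swaps the roles of \<open>A\<close> and \<open>B\<close>, so it suffices to cover \<open>Ai\<close>.
  Fix a perfect matching \<open>P \<supseteq> M0\<close>. Each still unmatched \<open>a \<in> Ai\<close> is matched to \<open>a + z\<close> for
  the first label \<open>z\<close>, in a fixed enumeration of the finitely many labels, for which the graph with
  \<open>a\<close> and \<open>a + z\<close> removed (besides the vertices of \<open>M0\<close>) still has a perfect matching; the
  edge of \<open>P\<close> at \<open>a\<close> shows that such a label exists. Sparseness of \<open>Ai\<close> makes the new edges a
  matching and keeps them far apart. The new matching is Baire measurable because, by a compactness
  argument, perfect matchability after removing two points \<open>c + p\<close> and \<open>c + q\<close> of the orbit of
  \<open>c\<close> is equivalent to countably many conditions on finite windows of that orbit, each a finite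
  Boolean combination of translates of \<open>A\<close> and \<open>B\<close>; and Baire measurable sets are closed under
  complements, countable unions and translations.\<close>

lemma tfrac_nth [simp]: "tfrac v $ i = frac (v $ i)"
  by (simp add: tfrac_def)

lemma tfrac_in_torus [simp]: "tfrac v \<in> torus"
  by (simp add: torus_def frac_lt_1)

lemma tfrac_torus: "v \<in> torus \<Longrightarrow> tfrac v = v"
  by (simp add: torus_def vec_eq_iff frac_eq)

lemma tfrac_add_tfrac [simp]:
  "tfrac (tfrac a + b) = tfrac (a + b)" "tfrac (a + tfrac b) = tfrac (a + b)"
  by (simp_all add: vec_eq_iff)

lemma tfrac_diff_tfrac [simp]:
  "tfrac (tfrac a - b) = tfrac (a - b)" "tfrac (a - tfrac b) = tfrac (a - b)"
  by (simp_all add: vec_eq_iff frac_diff_simp)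
     (metis diff_conv_add_uminus frac_add_simps(1))

lemma tfrac_eq_iff: "tfrac a = tfrac b \<longleftrightarrow> tfrac (a - b) = 0"
proof -
  have "frac (a $ i) = frac (b $ i) \<longleftrightarrow> frac (a $ i - b $ i) = 0" for i
    using frac_diff_eq frac_diff_zero by blast
  then show ?thesis
    by (simp add: vec_eq_iff del: frac_eq_0_iff)
qed

lemma tfrac_zero [simp]: "tfrac 0 = 0"
  by (simp add: vec_eq_iff)

lemma tfrac_uminus_cong: "tfrac a = tfrac b \<Longrightarrow> tfrac (- a) = tfrac (- b)"
  by (simp add: vec_eq_iff frac_neg_eq_iff)

lemma torus_eqI: "a \<in> torus \<Longrightarrow> b \<in> torus \<Longrightarrow> tfrac (a - b) = 0 \<Longrightarrow> a = b"
  by (metis tfrac_eq_iff tfrac_torus)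

lemma tadd_in_torus [simp]: "tadd a b \<in> torus"
  and tsub_in_torus [simp]: "tsub a b \<in> torus"
  by (simp_all add: tadd_def tsub_def)

lemma tadd_zero [simp]: "c \<in> torus \<Longrightarrow> tadd c 0 = c"
  by (simp add: tadd_def tfrac_torus)

lemma tadd_tsub: "b \<in> torus \<Longrightarrow> tadd a (tsub b a) = b"
  and tsub_tadd: "v \<in> torus \<Longrightarrow> tsub (tadd a v) a = v"
  and tsub_tsub: "v \<in> torus \<Longrightarrow> tsub b (tsub b v) = v"
  and tadd_tsub_cancel: "b \<in> torus \<Longrightarrow> tadd (tsub b v) v = b"
  by (simp_all add: tadd_def tsub_def tfrac_torus)

lemma tadd_right_cancel: "a \<in> torus \<Longrightarrow> a' \<in> torus \<Longrightarrow> tadd a v = tadd a' v \<Longrightarrow> a = a'"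
  by (rule torus_eqI) (auto simp: tadd_def tfrac_eq_iff)

definition comb :: "('d::finite \<Rightarrow> real^'k) \<Rightarrow> int^'d \<Rightarrow> real^'k" where
  "comb x n = (\<Sum>j\<in>UNIV. real_of_int (n $ j) *\<^sub>R x j)"

lemma lin_comb: "lin x n = tfrac (comb x n)"
  by (simp add: lin_def comb_def)

lemma comb_add: "comb x (n + m) = comb x n + comb x m"
  and comb_diff: "comb x (n - m) = comb x n - comb x m"
  and comb_uminus: "comb x (- n) = - comb x n"
  by (simp_all add: comb_def scaleR_add_left scaleR_diff_left sum.distrib sum_subtractf sum_negf)

lemma lin_in_torus [simp]: "lin x n \<in> torus"
  by (simp add: lin_comb)

lemma lin_zero [simp]: "lin x 0 = 0"
  by (simp add: lin_comb comb_def)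

lemma lin_eq_iff [simp]:
  assumes "free_vecs x" shows "lin x n = lin x m \<longleftrightarrow> n = m"
proof
  assume "lin x n = lin x m"
  then have "lin x (n - m) = 0"
    by (simp add: lin_comb comb_diff tfrac_eq_iff)
  then show "n = m"
    using assms unfolding free_vecs_def by (metis right_minus_eq)
qed simp

lemma tadd_lin: "tadd c (lin x w) = tfrac (c + comb x w)"
  by (simp add: tadd_def lin_comb)

lemma tadd_lin_lin [simp]: "tadd (tadd c (lin x w)) (lin x z) = tadd c (lin x (w + z))"
  by (simp add: tadd_lin comb_add add.assoc)

lemma tadd_lin_eq_iff [simp]:
  assumes "free_vecs x" shows "tadd c (lin x w) = tadd c (lin x w') \<longleftrightarrow> w = w'"
proof
  assume "tadd c (lin x w) = tadd c (lin x w')"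
  then have "tfrac ((c + comb x w) - (c + comb x w')) = 0"
    by (simp add: tadd_lin tfrac_eq_iff)
  then have "lin x w = lin x w'"
    by (simp add: lin_comb tfrac_eq_iff)
  then show "w = w'"
    using assms by simp
qed simp

lemma tsub_tadd_lin [simp]: "tsub (tadd c (lin x m)) (tadd c (lin x n)) = lin x (m - n)"
  by (simp add: tsub_def tadd_def lin_comb comb_diff)

lemma tsub_lin [simp]: "tsub (tadd c (lin x w)) (lin x z) = tadd c (lin x (w - z))"
  by (simp add: tsub_def tadd_def lin_comb comb_diff add_diff_eq)

lemma tsub_commute_lin: "tsub b a = lin x z \<Longrightarrow> tsub a b = lin x (- z)"
  using tfrac_uminus_cong[of "b - a" "comb x z"] by (simp add: tsub_def lin_comb comb_uminus)

lemma tadd_lin_edge: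
  assumes "tsub b a = lin x z" "b \<in> torus"
  shows "b = tadd a (lin x z)"
  using tadd_tsub[OF assms(2), of a] assms(1) by simp

lemma orbit_edge_fwd:
  assumes "tsub b a = lin x z" "a = tadd c (lin x w)" "b \<in> torus"
  shows "b = tadd c (lin x (w + z))"
  using tadd_lin_edge[OF assms(1,3)] assms(2) by simp

lemma orbit_edge_bwd:
  assumes "tsub b a = lin x z" "b = tadd c (lin x w)" "a \<in> torus"
  shows "a = tadd c (lin x (w - z))"
  using tsub_tsub[OF assms(3), of b] assms(1,2) by simp

definition int_box :: "nat \<Rightarrow> (int^'d::finite) set" where
  "int_box M = {z. \<forall>j. \<bar>z $ j\<bar> \<le> int M}"

lemma finite_int_box: "finite (int_box M :: (int^'d::finite) set)"
proof -
  have "int_box M \<subseteq> vec_lambda ` (PiE UNIV (\<lambda>_::'d. {- int M..int M}))"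
  proof
    fix z :: "int^'d"
    assume "z \<in> int_box M"
    then have "vec_nth z \<in> PiE UNIV (\<lambda>_. {- int M..int M})"
      by (clarsimp simp: int_box_def PiE_iff) (metis abs_le_iff minus_le_iff)
    then show "z \<in> vec_lambda ` (PiE UNIV (\<lambda>_::'d. {- int M..int M}))"
      by (metis image_eqI vec_nth_inverse)
  qed
  then show ?thesis
    by (rule finite_subset) (simp add: finite_PiE)
qed

lemma uminus_int_box: "z \<in> int_box M \<Longrightarrow> - z \<in> int_box M"
  by (simp add: int_box_def)

lemma VM_eq: "VM x M = lin x ` int_box M"
  by (auto simp: VM_def int_box_def)

lemma finite_VM: "finite (VM x M)"
  by (simp add: VM_eq finite_int_box)

lemma lin_in_VM_iff: "free_vecs x \<Longrightarrow> lin x z \<in> VM x M \<longleftrightarrow> z \<in> int_box M"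
  by (auto simp: VM_eq)

lemma VM_cases:
  assumes "v \<in> VM x M" obtains z where "z \<in> int_box M" "v = lin x z"
  using assms by (auto simp: VM_eq)

lemma tsub_commute_VM: "tsub b a \<in> VM x M \<Longrightarrow> tsub a b \<in> VM x M"
  by (metis VM_cases VM_eq image_eqI tsub_commute_lin uminus_int_box)

lemma zero_in_VM: "0 \<in> VM x M"
  using lin_zero[of x] unfolding VM_def by (auto intro!: exI[of _ 0])

lemma VM_subset_torus: "VM x M \<subseteq> torus"
  by (auto simp: VM_eq)

lemma linf_dist_le_iff: "linf_dist n m \<le> K \<longleftrightarrow> (\<forall>j. \<bar>n $ j - m $ j\<bar> \<le> K)"
  unfolding linf_dist_def by (subst Max_le_iff) auto

lemma linf_dist_gt_iff: "K < linf_dist n m \<longleftrightarrow> (\<exists>j. K < \<bar>n $ j - m $ j\<bar>)"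
  unfolding linf_dist_def by (subst Max_gr_iff) auto

lemma linf_dist_commute: "linf_dist n m = linf_dist m n"
  unfolding linf_dist_def by (simp add: abs_minus_commute)

lemma linf_dist_add_int_box: "z \<in> int_box M \<Longrightarrow> linf_dist n (n + z) \<le> int M"
  unfolding linf_dist_le_iff int_box_def by simp

lemma linf_dist_gt_shrink:
  assumes "linf_dist n s \<le> K1" "linf_dist t m \<le> K2" "K1 + K2 + D < linf_dist n m"
  shows "D < linf_dist s t"
proof -
  obtain j where j: "K1 + K2 + D < \<bar>n $ j - m $ j\<bar>"
    using assms(3) linf_dist_gt_iff by blast
  have "\<bar>n $ j - s $ j\<bar> \<le> K1" "\<bar>t $ j - m $ j\<bar> \<le> K2"
    using assms(1,2) linf_dist_le_iff by blast+
  then have "D < \<bar>s $ j - t $ j\<bar>"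
    using j by linarith
  then show ?thesis
    using linf_dist_gt_iff by blast
qed

section \<open>Baire measurable sets\<close>

lemma nowhere_dense_in_closure_of_diff:
  assumes "openin X U" shows "nowhere_dense_in X (X closure_of U - U)"
proof -
  let ?N = "X closure_of U - U"
  let ?W = "X interior_of (X closure_of ?N)"
  have "closedin X (topspace X - U)"
    using assms by blast
  moreover have "?N \<subseteq> topspace X - U"
    using closure_of_subset_topspace[of X U] by blast
  ultimately have "X closure_of ?N \<subseteq> topspace X - U"
    by (rule closure_of_minimal[rotated])
  then have "?W \<inter> U = {}"
    using interior_of_subset[of X "X closure_of ?N"] by blast
  then have "?W \<inter> X closure_of U = {}"
    using openin_Int_closure_of_eq_empty[of X ?W U] by simp
  moreover have "X closure_of ?N \<subseteq> X closure_of U"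
    by (metis Diff_subset closure_of_closure_of closure_of_mono)
  ultimately have "?W = {}"
    using interior_of_subset[of X "X closure_of ?N"] by blast
  then show ?thesis
    unfolding nowhere_dense_in_def using closure_of_subset_topspace[of X U] by blast
qed

lemma meagre_in_subset: "meagre_in X S \<Longrightarrow> S' \<subseteq> S \<Longrightarrow> meagre_in X S'"
  unfolding meagre_in_def by (meson subset_trans)

lemma meagre_in_if_nowhere_dense: "nowhere_dense_in X N \<Longrightarrow> meagre_in X N"
  unfolding meagre_in_def by (auto simp: nowhere_dense_in_def intro!: exI[of _ "{N}"])

lemma meagre_inI:
  assumes "S \<subseteq> topspace X" "countable G" "\<And>N. N \<in> G \<Longrightarrow> nowhere_dense_in X N" "S \<subseteq> \<Union>G"
  shows "meagre_in X S"
  unfolding meagre_in_def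
proof
  show "\<exists>F. countable F \<and> (\<forall>N\<in>F. nowhere_dense_in X N) \<and> S \<subseteq> \<Union>F"
    using assms(2-4) by (intro exI[of _ G]) simp
qed (fact assms(1))

lemma meagre_in_Union:
  assumes "countable F" "\<And>S. S \<in> F \<Longrightarrow> meagre_in X S"
  shows "meagre_in X (\<Union>F)"
proof -
  have "\<forall>S\<in>F. \<exists>G. countable G \<and> (\<forall>N\<in>G. nowhere_dense_in X N) \<and> S \<subseteq> \<Union>G"
    using assms(2) unfolding meagre_in_def by simp
  then obtain g where "\<forall>S\<in>F. countable (g S) \<and> (\<forall>N\<in>g S. nowhere_dense_in X N) \<and> S \<subseteq> \<Union>(g S)"
    by (auto dest: bchoice)
  then have g: "countable (g S)" "\<And>N. N \<in> g S \<Longrightarrow> nowhere_dense_in X N" "S \<subseteq> \<Union>(g S)"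
    if "S \<in> F" for S
    using that by simp_all
  show ?thesis
  proof (rule meagre_inI)
    show "\<Union>F \<subseteq> topspace X"
      using assms(2) by (simp add: meagre_in_def Union_least)
    show "countable (\<Union>(g ` F))"
      using assms(1) g(1) by (intro countable_UN)
    show "\<Union>F \<subseteq> \<Union>(\<Union>(g ` F))"
    proof
      fix y
      assume "y \<in> \<Union>F"
      then obtain S N where "S \<in> F" "N \<in> g S" "y \<in> N"
        using g(3) by (meson UnionE subsetD)
      then show "y \<in> \<Union>(\<Union>(g ` F))"
        by (meson UN_iff UnionI)
    qed
  qed (use g(2) in blast)
qed

lemma meagre_in_Un: "meagre_in X S \<Longrightarrow> meagre_in X T \<Longrightarrow> meagre_in X (S \<union> T)"
  using meagre_in_Union[of "{S, T}" X] by auto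

lemma meagre_in_homeomorphic_image:
  assumes hom: "homeomorphic_map X Y f" and "meagre_in X T"
  shows "meagre_in Y (f ` T)"
proof -
  obtain G where G: "countable G" "\<forall>N\<in>G. nowhere_dense_in X N" "T \<subseteq> \<Union>G" "T \<subseteq> topspace X"
    using assms(2) unfolding meagre_in_def by (elim conjE exE) simp
  have "nowhere_dense_in Y (f ` N)" if N: "nowhere_dense_in X N" for N
  proof -
    have "N \<subseteq> topspace X"
      using N unfolding nowhere_dense_in_def by blast
    then have "Y interior_of (Y closure_of (f ` N)) = f ` (X interior_of (X closure_of N))"
      using homeomorphic_map_closure_of[OF hom] homeomorphic_map_interior_of[OF hom closure_of_subset_topspace]
      by simp
    moreover have "f ` N \<subseteq> topspace Y"
      using \<open>N \<subseteq> topspace X\<close> homeomorphic_imp_surjective_map[OF hom] by blast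
    ultimately show ?thesis
      using N unfolding nowhere_dense_in_def by simp
  qed
  moreover have "f ` T \<subseteq> topspace Y"
    using G(4) homeomorphic_imp_surjective_map[OF hom] by blast
  moreover have "f ` T \<subseteq> \<Union>(image f ` G)"
    using image_mono[OF G(3), of f] by (simp add: image_Union)
  ultimately show ?thesis
    using G(1,2) by (intro meagre_inI[of _ _ "image f ` G"]) auto
qed

lemma meagre_in_empty [simp]: "meagre_in X {}"
  by (rule meagre_inI[of _ _ "{}"]) simp_all

lemma baire_measurable_in_openin: "openin X U \<Longrightarrow> baire_measurable_in X U"
  unfolding baire_measurable_in_def
  by (intro conjI openin_subset exI[of _ U]) simp_all

lemma baire_measurable_in_complement:
  assumes "baire_measurable_in X S"
  shows "baire_measurable_in X (topspace X - S)"
proof -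
  obtain U where U: "openin X U" "meagre_in X ((S - U) \<union> (U - S))"
    using assms unfolding baire_measurable_in_def by (elim conjE exE)
  let ?V = "topspace X - X closure_of U"
  have "((topspace X - S) - ?V) \<union> (?V - (topspace X - S))
      \<subseteq> ((S - U) \<union> (U - S)) \<union> (X closure_of U - U)"
    using closure_of_subset[OF openin_subset[OF U(1)]] by blast
  moreover have "meagre_in X (((S - U) \<union> (U - S)) \<union> (X closure_of U - U))"
    using meagre_in_Un[OF U(2) meagre_in_if_nowhere_dense[OF nowhere_dense_in_closure_of_diff[OF U(1)]]] .
  ultimately have "meagre_in X (((topspace X - S) - ?V) \<union> (?V - (topspace X - S)))"
    by (rule meagre_in_subset[rotated])
  moreover have "openin X ?V"
    by (rule openin_diff[OF openin_topspace closedin_closure_of])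
  ultimately show ?thesis
    unfolding baire_measurable_in_def by (intro conjI exI[of _ ?V]) auto
qed

lemma baire_measurable_in_Union:
  assumes "countable F" "\<And>S. S \<in> F \<Longrightarrow> baire_measurable_in X S"
  shows "baire_measurable_in X (\<Union>F)"
proof -
  have "\<forall>S\<in>F. \<exists>U. openin X U \<and> meagre_in X ((S - U) \<union> (U - S))"
    using assms(2) unfolding baire_measurable_in_def by simp
  then obtain g where g: "\<forall>S\<in>F. openin X (g S) \<and> meagre_in X ((S - g S) \<union> (g S - S))"
    by (auto dest: bchoice)
  have "(\<Union>F - \<Union>(g ` F)) \<union> (\<Union>(g ` F) - \<Union>F) \<subseteq> \<Union>((\<lambda>S. (S - g S) \<union> (g S - S)) ` F)"
    by blast
  moreover have "meagre_in X (\<Union>((\<lambda>S. (S - g S) \<union> (g S - S)) ` F))"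
    using g assms(1) by (intro meagre_in_Union) auto
  ultimately have "meagre_in X ((\<Union>F - \<Union>(g ` F)) \<union> (\<Union>(g ` F) - \<Union>F))"
    by (rule meagre_in_subset[rotated])
  moreover have "openin X (\<Union>(g ` F))"
    using g by auto
  moreover have "\<Union>F \<subseteq> topspace X"
    using assms(2) by (simp add: baire_measurable_in_def Union_least)
  ultimately show ?thesis
    unfolding baire_measurable_in_def by (intro conjI exI[of _ "\<Union>(g ` F)"])
qed

lemma baire_measurable_in_homeomorphic_image:
  assumes hom: "homeomorphic_map X Y f" and "baire_measurable_in X S"
  shows "baire_measurable_in Y (f ` S)"
proof -
  obtain U where U: "openin X U" "meagre_in X ((S - U) \<union> (U - S))" and S: "S \<subseteq> topspace X"
    using assms(2) unfolding baire_measurable_in_def by (elim conjE exE) simp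
  have "(f ` S - f ` U) \<union> (f ` U - f ` S) = f ` ((S - U) \<union> (U - S))"
    using homeomorphic_imp_injective_map[OF hom] S openin_subset[OF U(1)]
    unfolding inj_on_def by blast
  then have "meagre_in Y ((f ` S - f ` U) \<union> (f ` U - f ` S))"
    using meagre_in_homeomorphic_image[OF hom U(2)] by simp
  moreover have "openin Y (f ` U)"
    using homeomorphic_map_openness[OF hom openin_subset[OF U(1)]] U(1) by simp
  moreover have "f ` S \<subseteq> topspace Y"
    using image_mono[OF S, of f] homeomorphic_imp_surjective_map[OF hom] by simp
  ultimately show ?thesis
    unfolding baire_measurable_in_def by (intro conjI exI[of _ "f ` U"])
qed

lemma openin_torus_top: "openin torus_top U \<longleftrightarrow> U \<subseteq> torus \<and> open (tfrac -` U)"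
  unfolding torus_top_def topology_inverse'[OF istopology_torus] ..

lemma topspace_torus_top [simp]: "topspace torus_top = torus"
proof (rule subset_antisym)
  show "topspace torus_top \<subseteq> torus"
    using openin_topspace[of torus_top] unfolding openin_torus_top by (elim conjE)
  show "torus \<subseteq> topspace torus_top"
    by (rule openin_subset) (simp add: openin_torus_top vimage_def)
qed

lemma continuous_map_torus_translation:
  "continuous_map torus_top torus_top (\<lambda>a. tfrac (a + c))"
proof -
  have "openin torus_top {a \<in> torus. tfrac (a + c) \<in> U}" if "openin torus_top U" for U
  proof -
    have "tfrac -` {a \<in> torus. tfrac (a + c) \<in> U} = (\<lambda>y. y + c) -` (tfrac -` U)"
      by (auto simp: vimage_def)
    moreover have "open ((\<lambda>y. y + c) -` (tfrac -` U))"
      using that unfolding openin_torus_top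
      by (rule continuous_open_vimage[OF conjunct2]) (auto intro: continuous_intros)
    ultimately show ?thesis
      unfolding openin_torus_top by auto
  qed
  then show ?thesis
    unfolding continuous_map_def by simp
qed

lemma homeomorphic_map_torus_translation:
  "homeomorphic_map torus_top torus_top (\<lambda>a. tfrac (a + c))"
proof -
  have "homeomorphic_maps torus_top torus_top (\<lambda>a. tfrac (a + c)) (\<lambda>a. tfrac (a + - c))"
    unfolding homeomorphic_maps_def
    using continuous_map_torus_translation[of c] continuous_map_torus_translation[of "- c"]
    by (simp add: tfrac_torus)
  then show ?thesis
    by (rule homeomorphic_maps_imp_map)
qed

text \<open>Baire measurability of a subset of the torus, phrased for its defining predicate, so that it
  can be propagated through Boolean combinations and countable quantifiers.\<close>

definition bm_pred :: "(real^'k \<Rightarrow> bool) \<Rightarrow> bool" where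
  "bm_pred P \<longleftrightarrow> baire_measurable_in torus_top {c \<in> torus. P c}"

lemma baire_measurable_in_torus_subset: "baire_measurable_in torus_top S \<Longrightarrow> S \<subseteq> torus"
  unfolding baire_measurable_in_def by simp

lemma bm_pred_iff_baire_measurable:
  assumes "S \<subseteq> torus" shows "bm_pred (\<lambda>c. c \<in> S) \<longleftrightarrow> baire_measurable_in torus_top S"
proof -
  have "{c \<in> torus. c \<in> S} = S"
    using assms by blast
  then show ?thesis
    unfolding bm_pred_def by simp
qed

lemma bm_pred_mem: "baire_measurable_in torus_top S \<Longrightarrow> bm_pred (\<lambda>c. c \<in> S)"
  using bm_pred_iff_baire_measurable baire_measurable_in_torus_subset by blast

lemma bm_pred_cong: "(\<And>c. c \<in> torus \<Longrightarrow> P c = Q c) \<Longrightarrow> bm_pred P \<Longrightarrow> bm_pred Q"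
  unfolding bm_pred_def by (metis (mono_tags, lifting) Collect_cong)

lemma bm_pred_const: "bm_pred (\<lambda>c. b)"
  using baire_measurable_in_openin[OF openin_topspace[of torus_top]]
    baire_measurable_in_openin[OF openin_empty[of torus_top]]
  by (cases b) (simp_all add: bm_pred_def)

lemma bm_pred_not:
  assumes "bm_pred P" shows "bm_pred (\<lambda>c. \<not> P c)"
proof -
  have "torus - {c \<in> torus. P c} = {c \<in> torus. \<not> P c}"
    by blast
  then show ?thesis
    using assms baire_measurable_in_complement[of torus_top "{c \<in> torus. P c}"]
    unfolding bm_pred_def by simp
qed

lemma bm_pred_Bex:
  assumes "countable I" "\<And>i. i \<in> I \<Longrightarrow> bm_pred (P i)"
  shows "bm_pred (\<lambda>c. \<exists>i\<in>I. P i c)"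
proof -
  have "{c \<in> torus. \<exists>i\<in>I. P i c} = \<Union>((\<lambda>i. {c \<in> torus. P i c}) ` I)"
    by auto
  moreover have "baire_measurable_in torus_top (\<Union>((\<lambda>i. {c \<in> torus. P i c}) ` I))"
    using assms unfolding bm_pred_def by (intro baire_measurable_in_Union) auto
  ultimately show ?thesis
    unfolding bm_pred_def by simp
qed

lemma bm_pred_Ball:
  assumes "countable I" "\<And>i. i \<in> I \<Longrightarrow> bm_pred (P i)"
  shows "bm_pred (\<lambda>c. \<forall>i\<in>I. P i c)"
  using bm_pred_not[OF bm_pred_Bex[OF assms(1) bm_pred_not[OF assms(2)]]] by simp

lemma bm_pred_disj:
  assumes "bm_pred P" "bm_pred Q" shows "bm_pred (\<lambda>c. P c \<or> Q c)"
proof -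
  have "bm_pred (\<lambda>c. \<exists>i\<in>{True, False}. if i then P c else Q c)"
  proof (rule bm_pred_Bex)
    show "bm_pred (\<lambda>c. if i then P c else Q c)" for i
      using assms by (cases i) simp_all
  qed simp
  then show ?thesis
    by (rule bm_pred_cong[rotated]) auto
qed

lemma bm_pred_conj: "bm_pred P \<Longrightarrow> bm_pred Q \<Longrightarrow> bm_pred (\<lambda>c. P c \<and> Q c)"
  using bm_pred_not[OF bm_pred_disj[OF bm_pred_not bm_pred_not]] by simp

lemma bm_pred_imp: "bm_pred P \<Longrightarrow> bm_pred Q \<Longrightarrow> bm_pred (\<lambda>c. P c \<longrightarrow> Q c)"
  using bm_pred_disj[OF bm_pred_not] by simp

lemma bm_pred_tadd_mem:
  assumes "baire_measurable_in torus_top S"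
  shows "bm_pred (\<lambda>c. tadd c v \<in> S)"
proof -
  have S: "S \<subseteq> torus"
    using assms by (rule baire_measurable_in_torus_subset)
  have "{c \<in> torus. tadd c v \<in> S} = (\<lambda>a. tfrac (a + - v)) ` S"
  proof (intro equalityI subsetI)
    fix c
    assume c: "c \<in> {c \<in> torus. tadd c v \<in> S}"
    then have "c = tfrac (tadd c v + - v)"
      by (simp add: tadd_def tfrac_torus)
    then show "c \<in> (\<lambda>a. tfrac (a + - v)) ` S"
      using c by blast
  qed (use S in \<open>auto simp: tadd_def tfrac_torus\<close>)
  then show ?thesis
    unfolding bm_pred_def
    using baire_measurable_in_homeomorphic_image[OF homeomorphic_map_torus_translation[of "- v"] assms]
    by simp
qed

lemma is_matching_edges: "is_matching x M A B N \<Longrightarrow> (a, b) \<in> N \<Longrightarrow>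
    a \<in> A \<and> b \<in> B \<and> tsub b a \<in> VM x M"
  unfolding is_matching_def edges_def by blast

lemma is_matching_unique:
  assumes "is_matching x M A B N" "(a, b) \<in> N"
  shows is_matching_unique_right: "(a, b') \<in> N \<Longrightarrow> b' = b"
    and is_matching_unique_left: "(a', b) \<in> N \<Longrightarrow> a' = a"
  using assms unfolding is_matching_def by blast+

lemma is_matching_subset: "is_matching x M A B N \<Longrightarrow> N' \<subseteq> N \<Longrightarrow> is_matching x M A B N'"
  unfolding is_matching_def by blast

lemma is_matching_mono: "is_matching x M A B N \<Longrightarrow> A \<subseteq> A' \<Longrightarrow> B \<subseteq> B' \<Longrightarrow> is_matching x M A' B' N"
  unfolding is_matching_def edges_def by blast

lemma is_matching_Un:
  assumes "is_matching x M A B N1" "is_matching x M A B N2"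
    and "\<And>a b a' b'. (a, b) \<in> N1 \<Longrightarrow> (a', b') \<in> N2 \<Longrightarrow> a \<noteq> a' \<and> b \<noteq> b'"
  shows "is_matching x M A B (N1 \<union> N2)"
  using assms unfolding is_matching_def by (simp add: Ball_def) metis

lemma is_matching_insert:
  assumes "is_matching x M A B N" "a \<in> A - Domain N" "b \<in> B - Range N" "tsub b a \<in> VM x M"
  shows "is_matching x M A B (insert (a, b) N)"
proof -
  have "is_matching x M A B {(a, b)}"
    using assms(2-4) unfolding is_matching_def edges_def by blast
  then have "is_matching x M A B ({(a, b)} \<union> N)"
    by (rule is_matching_Un[OF _ assms(1)]) (use assms(2,3) in blast)
  then show ?thesis
    by simp
qed

lemma is_matching_converse:
  assumes "is_matching x M A B N" shows "is_matching x M B A (converse N)"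
proof -
  have "converse N \<subseteq> edges x M B A"
    using is_matching_edges[OF assms] by (force simp: edges_def dest: tsub_commute_VM)
  then show ?thesis
    using assms unfolding is_matching_def by simp
qed

lemma is_perfect_matching_converse:
  "is_perfect_matching x M A B N \<Longrightarrow> is_perfect_matching x M B A (converse N)"
  unfolding is_perfect_matching_def using is_matching_converse by auto

lemma extendable_converse: "extendable x M A B N \<Longrightarrow> extendable x M B A (converse N)"
  unfolding extendable_def using is_matching_converse is_perfect_matching_converse by blast

lemma is_perfect_matching_Diff:
  assumes P: "is_perfect_matching x M A B P" and "N \<subseteq> P"
  shows "is_perfect_matching x M (A - Domain N) (B - Range N) (P - N)"
proof -
  have P_m: "is_matching x M A B P" and "Domain P = A" "Range P = B"
    using P unfolding is_perfect_matching_def by auto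
  have "a \<notin> Domain N \<and> b \<notin> Range N" if "(a, b) \<in> P - N" for a b
    using that \<open>N \<subseteq> P\<close> is_matching_unique[OF P_m] by blast
  then have "P - N \<subseteq> edges x M (A - Domain N) (B - Range N)"
    using P_m unfolding is_matching_def edges_def by blast
  moreover have "Domain (P - N) = A - Domain N" "Range (P - N) = B - Range N"
    using calculation \<open>Domain P = A\<close> \<open>Range P = B\<close> unfolding edges_def by blast+
  ultimately show ?thesis
    using P_m unfolding is_perfect_matching_def is_matching_def by blast
qed

lemma is_perfect_matching_Un:
  assumes N: "is_matching x M A B N"
    and R: "is_perfect_matching x M (A - Domain N) (B - Range N) R"
  shows "is_perfect_matching x M A B (R \<union> N)"
proof -
  have R_m: "is_matching x M (A - Domain N) (B - Range N) R" and "Domain R = A - Domain N"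
    "Range R = B - Range N"
    using R unfolding is_perfect_matching_def by auto
  have "is_matching x M A B (R \<union> N)"
    using is_matching_mono[OF R_m] N is_matching_edges[OF R_m]
    by (intro is_matching_Un) blast+
  moreover have "Domain N \<subseteq> A" "Range N \<subseteq> B"
    using is_matching_edges[OF N] by blast+
  ultimately show ?thesis
    using \<open>Domain R = A - Domain N\<close> \<open>Range R = B - Range N\<close>
    unfolding is_perfect_matching_def by blast
qed

lemma extendable_insert:
  assumes N: "is_matching x M A B N" and "a \<in> A - Domain N" "b \<in> B - Range N" "tsub b a \<in> VM x M"
    and "is_perfect_matching x M ((A - Domain N) - {a}) ((B - Range N) - {b}) R"
  shows "extendable x M A B (insert (a, b) N)"
proof -
  have N': "is_matching x M A B (insert (a, b) N)"
    using assms(1-4) by (rule is_matching_insert)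
  have "A - Domain (insert (a, b) N) = (A - Domain N) - {a}"
    "B - Range (insert (a, b) N) = (B - Range N) - {b}"
    by auto
  then have "is_perfect_matching x M A B (R \<union> insert (a, b) N)"
    using assms(5) by (intro is_perfect_matching_Un[OF N']) simp
  then show ?thesis
    unfolding extendable_def using N' by blast
qed

lemma baire_measurable_Domain:
  assumes "baire_matching x M N" "is_matching x M A B N" "A \<subseteq> torus"
  shows "baire_measurable_in torus_top (Domain N)"
proof -
  have "Domain N = \<Union>((\<lambda>v. {a. \<exists>b. (a, b) \<in> N \<and> tsub b a = v}) ` VM x M)"
    using is_matching_edges[OF assms(2)] by auto
  then show ?thesis
    using assms(1) unfolding baire_matching_def
    by (auto intro!: baire_measurable_in_Union countable_finite finite_imageI finite_VM)
qed

lemma baire_matching_converse: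
  fixes x :: "'d::finite \<Rightarrow> real^'k"
  assumes free: "free_vecs x" and N_bm: "baire_matching x M N" and N: "is_matching x M A B N"
    and A: "A \<subseteq> torus" and B: "B \<subseteq> torus"
  shows "baire_matching x M (converse N)"
  unfolding baire_matching_def
proof
  fix v
  assume "v \<in> VM x M"
  then obtain w where w: "w \<in> int_box M" "v = lin x w"
    by (rule VM_cases)
  let ?D = "{a. \<exists>b. (a, b) \<in> N \<and> tsub b a = lin x (- w)}"
  let ?S = "{b. \<exists>a. (b, a) \<in> converse N \<and> tsub a b = v}"
  have "baire_measurable_in torus_top ?D"
    using N_bm uminus_int_box[OF w(1)] unfolding baire_matching_def VM_eq by blast
  then have "bm_pred (\<lambda>c. tadd c (lin x w) \<in> ?D)"
    by (rule bm_pred_tadd_mem)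
  moreover have "tadd c (lin x w) \<in> ?D \<longleftrightarrow> c \<in> ?S" if c: "c \<in> torus" for c
  proof
    assume "tadd c (lin x w) \<in> ?D"
    then obtain b where b: "(tadd c (lin x w), b) \<in> N" "tsub b (tadd c (lin x w)) = lin x (- w)"
      by blast
    have "b = tadd c (lin x (w + - w))"
      using orbit_edge_fwd[OF b(2) refl] is_matching_edges[OF N b(1)] B by blast
    then have "b = c"
      using c by simp
    moreover have "tsub (tadd c (lin x w)) c = v"
      using tsub_tadd[of "lin x w" c] w(2) by simp
    ultimately show "c \<in> ?S"
      using b(1) by blast
  next
    assume "c \<in> ?S"
    then obtain a where a: "(a, c) \<in> N" "tsub a c = lin x w"
      using w(2) by blast
    have "a = tadd c (lin x w)"
      using tadd_tsub[of a c] is_matching_edges[OF N a(1)] A a(2) by auto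
    moreover have "tsub c a = lin x (- w)"
      using tsub_commute_lin[OF a(2)] .
    ultimately show "tadd c (lin x w) \<in> ?D"
      using a(1) by blast
  qed
  ultimately have "bm_pred (\<lambda>c. c \<in> ?S)"
    by (rule bm_pred_cong[rotated])
  moreover have "?S \<subseteq> torus"
    using is_matching_edges[OF N] B by blast
  ultimately show "baire_measurable_in torus_top ?S"
    using bm_pred_iff_baire_measurable by blast
qed

lemma edge_section_converse:
  "edge_section x (converse N) u = (\<lambda>(n, m). (m, n)) ` edge_section x N u"
  unfolding edge_section_def by force

section \<open>Compactness\<close>

lemma closedin_product_discrete_if_finitely_determined:
  fixes S :: "('i \<Rightarrow> 'a) set" and V :: "'a set"
  defines "X \<equiv> product_topology (\<lambda>_. discrete_topology V) UNIV"
  assumes "finite J" "S \<subseteq> topspace X"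
    and determined: "\<And>f g. f \<in> topspace X \<Longrightarrow> g \<in> topspace X \<Longrightarrow> \<forall>j\<in>J. f j = g j \<Longrightarrow> f \<in> S \<Longrightarrow> g \<in> S"
  shows "closedin X S"
  unfolding closedin_def
proof (intro conjI openin_subopen[THEN iffD2] ballI)
  fix f
  assume f: "f \<in> topspace X - S"
  define T where "T = (\<Inter>j\<in>J. {g \<in> topspace X. g j \<in> {f j}}) \<inter> topspace X"
  have "f j \<in> V" for j
    using f by (auto simp: X_def)
  then have "openin X T"
    unfolding T_def X_def using \<open>finite J\<close>
    by (intro openin_INT openin_continuous_map_preimage[OF continuous_map_product_projection]) auto
  moreover have "T \<subseteq> topspace X - S"
  proof
    fix g
    assume "g \<in> T"
    then have g: "g \<in> topspace X" "\<forall>j\<in>J. g j = f j"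
      unfolding T_def by auto
    then have "g \<notin> S"
      using f determined[of g f] by auto
    then show "g \<in> topspace X - S"
      using g by simp
  qed
  ultimately show "\<exists>T. openin X T \<and> f \<in> T \<and> T \<subseteq> topspace X - S"
    using f unfolding T_def by blast
qed (fact \<open>S \<subseteq> topspace X\<close>)

text \<open>Vertex \<open>(True, a)\<close> of the \<open>A\<close>-side and vertex \<open>(False, b)\<close> of the \<open>B\<close>-side are labelled
  with \<open>b - a\<close> for the edge \<open>(a, b)\<close> through them (junk label \<open>0\<close> at unmatched vertices).\<close>

lemma matching_labelling:
  assumes N: "is_matching x M A B N"
  obtains f where "\<And>i. f i \<in> VM x M"
    and "\<And>a b. (a, b) \<in> N \<Longrightarrow> f (True, a) = tsub b a \<and> f (False, b) = tsub b a"
proof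
  have the_right: "(THE b'. (a, b') \<in> N) = b" if "(a, b) \<in> N" for a b
    by (rule the_equality[where P = "\<lambda>b'. (a, b') \<in> N", OF that is_matching_unique_right[OF N that]])
  have the_left: "(THE a'. (a', b) \<in> N) = a" if "(a, b) \<in> N" for a b
    by (rule the_equality[where P = "\<lambda>a'. (a', b) \<in> N", OF that is_matching_unique_left[OF N that]])
  define f where "f i = (if fst i
      then (if snd i \<in> Domain N then tsub (THE b. (snd i, b) \<in> N) (snd i) else 0)
      else (if snd i \<in> Range N then tsub (snd i) (THE a. (a, snd i) \<in> N) else 0))" for i
  show f_edge: "f (True, a) = tsub b a \<and> f (False, b) = tsub b a" if "(a, b) \<in> N" for a b
    using that by (auto simp: f_def the_left the_right)
  show "f i \<in> VM x M" for i
  proof (cases i)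
    case (Pair s c)
    show ?thesis
    proof (cases "s \<and> c \<in> Domain N \<or> \<not> s \<and> c \<in> Range N")
      case True
      then obtain a b where "(a, b) \<in> N" "c = (if s then a else b)"
        by auto
      then show ?thesis
        using f_edge is_matching_edges[OF N] Pair by (cases s) auto
    next
      case False
      then show ?thesis
        using Pair zero_in_VM by (auto simp: f_def)
    qed
  qed
qed

lemma is_perfect_matching_of_labelling:
  assumes A: "A \<subseteq> torus" and B: "B \<subseteq> torus" and f_VM: "\<And>i. f i \<in> VM x M"
    and fA: "\<And>a. a \<in> A \<Longrightarrow> tadd a (f (True, a)) \<in> B \<and> f (False, tadd a (f (True, a))) = f (True, a)"
    and fB: "\<And>b. b \<in> B \<Longrightarrow> tsub b (f (False, b)) \<in> A \<and> f (True, tsub b (f (False, b))) = f (False, b)"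
  shows "is_perfect_matching x M A B {(a, tadd a (f (True, a))) | a. a \<in> A}"
proof -
  define P where "P = {(a, tadd a (f (True, a))) | a. a \<in> A}"
  have "tsub (tadd a (f i)) a = f i" for a i
    using f_VM VM_subset_torus by (blast intro: tsub_tadd)
  then have "P \<subseteq> edges x M A B"
    using fA f_VM by (auto simp: P_def edges_def)
  moreover have "a = a' \<longleftrightarrow> b = b'" if "(a, b) \<in> P" "(a', b') \<in> P" for a b a' b'
  proof
    assume "b = b'"
    with that have "f (True, a) = f (True, a')" "tadd a (f (True, a)) = tadd a' (f (True, a'))"
      using fA unfolding P_def by auto metis
    moreover have "a \<in> torus" "a' \<in> torus"
      using that A unfolding P_def by auto
    ultimately show "a = a'"
      by (metis tadd_right_cancel)
  qed (use that in \<open>auto simp: P_def\<close>)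
  moreover have "B \<subseteq> Range P"
  proof
    fix b
    assume "b \<in> B"
    then have "(tsub b (f (False, b)), b) \<in> P"
      using fB B tadd_tsub_cancel unfolding P_def by fastforce
    then show "b \<in> Range P"
      by blast
  qed
  ultimately have "is_perfect_matching x M A B P"
    unfolding is_perfect_matching_def is_matching_def edges_def by (auto simp: P_def)
  then show ?thesis
    unfolding P_def .
qed

text \<open>A labelling codes a perfect matching when it is consistent at every vertex: the label \<open>v\<close>
  at \<open>i\<close> points to a vertex \<open>partner i v\<close> of the other side carrying the same label.\<close>

definition labelling_space :: "('d::finite \<Rightarrow> real^'k) \<Rightarrow> nat \<Rightarrow> (bool \<times> (real^'k) \<Rightarrow> real^'k) topology"
  where "labelling_space x M = product_topology (\<lambda>_. discrete_topology (VM x M)) UNIV"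

definition partner :: "bool \<times> (real^'k) \<Rightarrow> real^'k \<Rightarrow> bool \<times> (real^'k)" where
  "partner i v = (if fst i then (False, tadd (snd i) v) else (True, tsub (snd i) v))"

definition consistent_at :: "('d::finite \<Rightarrow> real^'k) \<Rightarrow> nat \<Rightarrow> (real^'k) set \<Rightarrow> (real^'k) set
    \<Rightarrow> bool \<times> (real^'k) \<Rightarrow> (bool \<times> (real^'k) \<Rightarrow> real^'k) set" where
  "consistent_at x M A B i = {f \<in> topspace (labelling_space x M).
     snd i \<in> (if fst i then A else B) \<longrightarrow>
       snd (partner i (f i)) \<in> (if fst i then B else A) \<and> f (partner i (f i)) = f i}"

lemma topspace_labelling_space: "f \<in> topspace (labelling_space x M) \<longleftrightarrow> (\<forall>i. f i \<in> VM x M)"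
  by (simp add: labelling_space_def PiE_UNIV_domain Pi_iff del: split_paired_All)

lemma closedin_consistent_at: "closedin (labelling_space x M) (consistent_at x M A B i)"
  unfolding labelling_space_def
proof (rule closedin_product_discrete_if_finitely_determined[of "insert i (partner i ` VM x M)"])
  show "finite (insert i (partner i ` VM x M))"
    by (simp add: finite_VM)
  show "consistent_at x M A B i \<subseteq> topspace (product_topology (\<lambda>_. discrete_topology (VM x M)) UNIV)"
    unfolding consistent_at_def labelling_space_def by blast
  fix f g
  assume "f \<in> topspace (product_topology (\<lambda>_. discrete_topology (VM x M)) UNIV)"
    and g: "g \<in> topspace (product_topology (\<lambda>_. discrete_topology (VM x M)) UNIV)"
    and "\<forall>j\<in>insert i (partner i ` VM x M). f j = g j" and "f \<in> consistent_at x M A B i"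
  then have "f i = g i" "f (partner i (f i)) = g (partner i (g i))"
    by (auto simp: topspace_labelling_space[unfolded labelling_space_def])
  then show "g \<in> consistent_at x M A B i"
    using \<open>f \<in> consistent_at x M A B i\<close> g unfolding consistent_at_def labelling_space_def by simp
qed

lemma labelling_consistent_at_covered:
  assumes N: "is_matching x M A B N" and A: "A \<subseteq> torus" and B: "B \<subseteq> torus"
    and f: "\<And>i. f i \<in> VM x M" "\<And>a b. (a, b) \<in> N \<Longrightarrow> f (True, a) = tsub b a \<and> f (False, b) = tsub b a"
    and covered: "c \<in> (if s then A else B) \<Longrightarrow> c \<in> (if s then Domain N else Range N)"
  shows "f \<in> consistent_at x M A B (s, c)"
proof -
  have "partner (s, c) (f (s, c)) = (\<not> s, if s then b else a) \<and> f (s, c) = tsub b a"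
    if "(a, b) \<in> N" "c = (if s then a else b)" for a b
  proof -
    have "a \<in> torus" "b \<in> torus"
      using is_matching_edges[OF N that(1)] A B by blast+
    then show ?thesis
      using that f(2)[OF that(1)] by (auto simp: partner_def tadd_tsub tsub_tsub)
  qed
  moreover have "\<exists>a b. (a, b) \<in> N \<and> c = (if s then a else b)" if "c \<in> (if s then A else B)"
    using covered[OF that] by (cases s) auto
  ultimately show ?thesis
    unfolding consistent_at_def using f is_matching_edges[OF N] by (auto simp: topspace_labelling_space)
qed

text \<open>Compactness, as for the de Bruijn--Erd\<ouml>s theorem: the labellings form a compact product of finite
  discrete spaces, each consistency condition is closed, and finite coverings give the finite
  intersection property.\<close>

lemma consistent_labelling_if_finite_coverings:
  fixes x :: "'d::finite \<Rightarrow> real^'k"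
  assumes A: "A \<subseteq> torus" and B: "B \<subseteq> torus"
    and finite_cover: "\<And>FA FB. finite FA \<Longrightarrow> finite FB \<Longrightarrow> FA \<subseteq> A \<Longrightarrow> FB \<subseteq> B \<Longrightarrow>
       \<exists>N. is_matching x M A B N \<and> FA \<subseteq> Domain N \<and> FB \<subseteq> Range N"
  obtains f where "\<And>i. f i \<in> VM x M"
    and "\<And>a. a \<in> A \<Longrightarrow> tadd a (f (True, a)) \<in> B \<and> f (False, tadd a (f (True, a))) = f (True, a)"
    and "\<And>b. b \<in> B \<Longrightarrow> tsub b (f (False, b)) \<in> A \<and> f (True, tsub b (f (False, b))) = f (False, b)"
proof -
  have fip: "\<Inter>F \<noteq> {}" if F: "finite F" "F \<subseteq> range (consistent_at x M A B)" for F
  proof -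
    obtain I where I: "finite I" "F = consistent_at x M A B ` I"
      using finite_subset_image[OF F] by blast
    obtain N where N: "is_matching x M A B N" "A \<inter> snd ` I \<subseteq> Domain N" "B \<inter> snd ` I \<subseteq> Range N"
      using finite_cover[of "A \<inter> snd ` I" "B \<inter> snd ` I"] I(1) by blast
    obtain f where "\<And>i. f i \<in> VM x M"
      "\<And>a b. (a, b) \<in> N \<Longrightarrow> f (True, a) = tsub b a \<and> f (False, b) = tsub b a"
      using matching_labelling[OF N(1)] by blast
    moreover have "c \<in> (if s then Domain N else Range N)"
      if "(s, c) \<in> I" "c \<in> (if s then A else B)" for s c
    proof -
      have "c \<in> snd ` I"
        using that(1) by (metis image_eqI snd_conv)
      then show ?thesis
        using that(2) N(2,3) by (cases s) auto
    qed
    ultimately have "f \<in> consistent_at x M A B (s, c)" if "(s, c) \<in> I" for s c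
      using that by (intro labelling_consistent_at_covered[OF N(1) A B])
    then have "f \<in> \<Inter>F"
      using I(2) by auto
    then show ?thesis
      by blast
  qed
  have compact: "compact_space (labelling_space x M)"
    unfolding labelling_space_def
    by (simp add: compact_space_product_topology compact_space_discrete_topology finite_VM)
  have closed: "\<forall>C\<in>range (consistent_at x M A B). closedin (labelling_space x M) C"
    using closedin_consistent_at by blast
  have "\<forall>F. finite F \<and> F \<subseteq> range (consistent_at x M A B) \<longrightarrow> \<Inter>F \<noteq> {}"
    using fip by blast
  then have "\<Inter>(range (consistent_at x M A B)) \<noteq> {}"
    using compact_space_fip[THEN iffD1, OF compact, rule_format, OF conjI[OF closed]] by blast
  then obtain f where f: "\<And>i. f \<in> consistent_at x M A B i"
    by blast
  show ?thesis
  proof (rule that)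
    show "f i \<in> VM x M" for i
      using f[of i] topspace_labelling_space unfolding consistent_at_def by blast
    show "tadd a (f (True, a)) \<in> B \<and> f (False, tadd a (f (True, a))) = f (True, a)" if "a \<in> A" for a
      using f[of "(True, a)"] that by (simp add: consistent_at_def partner_def)
    show "tsub b (f (False, b)) \<in> A \<and> f (True, tsub b (f (False, b))) = f (False, b)" if "b \<in> B" for b
      using f[of "(False, b)"] that by (simp add: consistent_at_def partner_def)
  qed
qed

lemma is_perfect_matching_if_finite_coverings:
  fixes x :: "'d::finite \<Rightarrow> real^'k"
  assumes "A \<subseteq> torus" "B \<subseteq> torus"
    and "\<And>FA FB. finite FA \<Longrightarrow> finite FB \<Longrightarrow> FA \<subseteq> A \<Longrightarrow> FB \<subseteq> B \<Longrightarrow>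
       \<exists>N. is_matching x M A B N \<and> FA \<subseteq> Domain N \<and> FB \<subseteq> Range N"
  shows "\<exists>P. is_perfect_matching x M A B P"
proof -
  obtain f where "\<And>i. f i \<in> VM x M"
    "\<And>a. a \<in> A \<Longrightarrow> tadd a (f (True, a)) \<in> B \<and> f (False, tadd a (f (True, a))) = f (True, a)"
    "\<And>b. b \<in> B \<Longrightarrow> tsub b (f (False, b)) \<in> A \<and> f (True, tsub b (f (False, b))) = f (False, b)"
    using consistent_labelling_if_finite_coverings[OF assms] by blast
  then have "is_perfect_matching x M A B {(a, tadd a (f (True, a))) | a. a \<in> A}"
    by (intro is_perfect_matching_of_labelling[OF assms(1,2)])
  then show ?thesis
    by blast
qed

section \<open>Removing two points of an orbit\<close>

definition orbit :: "('d::finite \<Rightarrow> real^'k) \<Rightarrow> real^'k \<Rightarrow> (real^'k) set" where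
  "orbit x c = range (\<lambda>w. tadd c (lin x w))"

lemma orbit_edge_iff:
  assumes "tsub b a \<in> VM x M" "a \<in> torus" "b \<in> torus"
  shows "a \<in> orbit x c \<longleftrightarrow> b \<in> orbit x c"
proof -
  obtain z where z: "tsub b a = lin x z"
    using assms(1) by (rule VM_cases)
  show ?thesis
    unfolding orbit_def using orbit_edge_fwd[OF z _ assms(3)] orbit_edge_bwd[OF z _ assms(2)] by blast
qed

text \<open>Edges along the orbit of \<open>c\<close>, coded by pairs \<open>(w, z)\<close> of a position and a label; the ones
  that can touch a finite window \<open>W\<close> of positions form a finite set.\<close>

definition orbit_edges ::
    "('d::finite \<Rightarrow> real^'k) \<Rightarrow> real^'k \<Rightarrow> ((int^'d) \<times> (int^'d)) set \<Rightarrow> ((real^'k) \<times> (real^'k)) set" where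
  "orbit_edges x c Q = (\<lambda>(w, z). (tadd c (lin x w), tadd c (lin x (w + z)))) ` Q"

definition window_edges :: "nat \<Rightarrow> (int^'d::finite) set \<Rightarrow> ((int^'d) \<times> (int^'d)) set" where
  "window_edges M W = (W \<union> (\<lambda>(w, z). w - z) ` (W \<times> int_box M)) \<times> int_box M"

definition window_matching ::
    "('d::finite \<Rightarrow> real^'k) \<Rightarrow> nat \<Rightarrow> (real^'k) set \<Rightarrow> (real^'k) set \<Rightarrow> real^'k
      \<Rightarrow> (int^'d) set \<Rightarrow> ((int^'d) \<times> (int^'d)) set \<Rightarrow> bool" where
  "window_matching x M A B c W Q \<longleftrightarrow> is_matching x M A B (orbit_edges x c Q) \<and>
     (\<forall>w\<in>W. tadd c (lin x w) \<in> A \<longrightarrow> tadd c (lin x w) \<in> Domain (orbit_edges x c Q)) \<and>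
     (\<forall>w\<in>W. tadd c (lin x w) \<in> B \<longrightarrow> tadd c (lin x w) \<in> Range (orbit_edges x c Q))"

lemma finite_window_edges: "finite W \<Longrightarrow> finite (window_edges M W)"
  by (simp add: window_edges_def finite_int_box)

lemma countable_finite_int_vec_sets: "countable {W :: (int^'d::finite) set. finite W}"
proof -
  have "countable (range (vec_lambda :: ('d \<Rightarrow> int) \<Rightarrow> int^'d))"
    by (rule countable_image) simp
  moreover have "range (vec_lambda :: ('d \<Rightarrow> int) \<Rightarrow> int^'d) = UNIV"
    by (metis surj_def vec_nth_inverse)
  ultimately have "countable (UNIV :: (int^'d) set)"
    by simp
  from countable_Collect_finite_subset[OF this] show ?thesis
    by simp
qed

lemma mem_orbit_edges:
  "(a, b) \<in> orbit_edges x c Q \<longleftrightarrow> (\<exists>(w, z)\<in>Q. a = tadd c (lin x w) \<and> b = tadd c (lin x (w + z)))"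
  unfolding orbit_edges_def by auto

lemma orbit_edges_unique_iff:
  assumes free: "free_vecs x"
  shows "(\<forall>a b a' b'. (a, b) \<in> orbit_edges x c Q \<longrightarrow> (a', b') \<in> orbit_edges x c Q \<longrightarrow>
        (a = a' \<longleftrightarrow> b = b')) \<longleftrightarrow> (\<forall>e\<in>Q. \<forall>e'\<in>Q. fst e = fst e' \<longleftrightarrow> fst e + snd e = fst e' + snd e')"
proof
  assume H: "\<forall>a b a' b'. (a, b) \<in> orbit_edges x c Q \<longrightarrow> (a', b') \<in> orbit_edges x c Q \<longrightarrow>
      (a = a') = (b = b')"
  show "\<forall>e\<in>Q. \<forall>e'\<in>Q. fst e = fst e' \<longleftrightarrow> fst e + snd e = fst e' + snd e'"
  proof (clarsimp)
    fix w z w' z'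
    assume "(w, z) \<in> Q" "(w', z') \<in> Q"
    then have "(tadd c (lin x w), tadd c (lin x (w + z))) \<in> orbit_edges x c Q"
      "(tadd c (lin x w'), tadd c (lin x (w' + z'))) \<in> orbit_edges x c Q"
      by (force simp: orbit_edges_def)+
    then show "w = w' \<longleftrightarrow> w + z = w' + z'"
      using H[rule_format] free by (metis tadd_lin_eq_iff)
  qed
next
  assume H: "\<forall>e\<in>Q. \<forall>e'\<in>Q. fst e = fst e' \<longleftrightarrow> fst e + snd e = fst e' + snd e'"
  show "\<forall>a b a' b'. (a, b) \<in> orbit_edges x c Q \<longrightarrow> (a', b') \<in> orbit_edges x c Q \<longrightarrow>
      (a = a') = (b = b')"
  proof (intro allI impI)
    fix a b a' b'
    assume "(a, b) \<in> orbit_edges x c Q" "(a', b') \<in> orbit_edges x c Q"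
    then obtain w z w' z' where "(w, z) \<in> Q" "(w', z') \<in> Q"
      and "a = tadd c (lin x w)" "b = tadd c (lin x (w + z))"
      and "a' = tadd c (lin x w')" "b' = tadd c (lin x (w' + z'))"
      unfolding mem_orbit_edges by blast
    then show "(a = a') = (b = b')"
      using H free by fastforce
  qed
qed

text \<open>For a free family, a window matching is a finite Boolean combination of memberships of
  translates of \<open>c\<close> in \<open>A\<close> and \<open>B\<close>.\<close>

lemma window_matching_iff:
  assumes free: "free_vecs x"
  shows "window_matching x M A B c W Q \<longleftrightarrow>
    (\<forall>e\<in>Q. tadd c (lin x (fst e)) \<in> A \<and> tadd c (lin x (fst e + snd e)) \<in> B \<and> snd e \<in> int_box M) \<and>
    (\<forall>e\<in>Q. \<forall>e'\<in>Q. fst e = fst e' \<longleftrightarrow> fst e + snd e = fst e' + snd e') \<and>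
    (\<forall>w\<in>W. tadd c (lin x w) \<in> A \<longrightarrow> (\<exists>e\<in>Q. fst e = w)) \<and>
    (\<forall>w\<in>W. tadd c (lin x w) \<in> B \<longrightarrow> (\<exists>e\<in>Q. fst e + snd e = w))"
proof -
  have edges: "orbit_edges x c Q \<subseteq> edges x M A B \<longleftrightarrow>
      (\<forall>e\<in>Q. tadd c (lin x (fst e)) \<in> A \<and> tadd c (lin x (fst e + snd e)) \<in> B \<and> snd e \<in> int_box M)"
    using free by (auto simp: orbit_edges_def edges_def lin_in_VM_iff)
  have "tadd c (lin x w) \<in> Domain (orbit_edges x c Q) \<longleftrightarrow> (\<exists>e\<in>Q. fst e = w)"
    "tadd c (lin x w) \<in> Range (orbit_edges x c Q) \<longleftrightarrow> (\<exists>e\<in>Q. fst e + snd e = w)" for w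
    using free by (force simp: orbit_edges_def)+
  then show ?thesis
    unfolding window_matching_def is_matching_def edges orbit_edges_unique_iff[OF free] by simp
qed

lemma bm_pred_window_matchings:
  fixes x :: "'d::finite \<Rightarrow> real^'k"
  assumes free: "free_vecs x"
    and A: "baire_measurable_in torus_top A" and B: "baire_measurable_in torus_top B"
  shows "bm_pred (\<lambda>c. \<forall>W\<in>{W. finite W}. \<exists>Q\<in>Pow (window_edges M W).
    window_matching x M (A - {tadd c (lin x p)}) (B - {tadd c (lin x q)}) c W Q)"
proof (intro bm_pred_Ball bm_pred_Bex countable_finite_int_vec_sets)
  fix W :: "(int^'d) set" and Q
  assume "W \<in> {W. finite W}" and Q: "Q \<in> Pow (window_edges M W)"
  then have "finite W" "finite Q"
    using finite_subset[OF _ finite_window_edges] by auto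
  then have "bm_pred (\<lambda>c.
    (\<forall>e\<in>Q. (tadd c (lin x (fst e)) \<in> A \<and> fst e \<noteq> p) \<and>
      (tadd c (lin x (fst e + snd e)) \<in> B \<and> fst e + snd e \<noteq> q) \<and> snd e \<in> int_box M) \<and>
    (\<forall>e\<in>Q. \<forall>e'\<in>Q. fst e = fst e' \<longleftrightarrow> fst e + snd e = fst e' + snd e') \<and>
    (\<forall>w\<in>W. tadd c (lin x w) \<in> A \<and> w \<noteq> p \<longrightarrow> (\<exists>e\<in>Q. fst e = w)) \<and>
    (\<forall>w\<in>W. tadd c (lin x w) \<in> B \<and> w \<noteq> q \<longrightarrow> (\<exists>e\<in>Q. fst e + snd e = w)))"
    by (intro bm_pred_conj bm_pred_Ball bm_pred_imp bm_pred_tadd_mem bm_pred_const A B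
        countable_finite)
  then show "bm_pred (\<lambda>c.
      window_matching x M (A - {tadd c (lin x p)}) (B - {tadd c (lin x q)}) c W Q)"
    by (rule bm_pred_cong[rotated]) (simp add: window_matching_iff[OF free] free)
qed (simp_all add: finite_window_edges countable_finite)

lemma window_matching_of_perfect_matching:
  assumes P: "is_perfect_matching x M A B P" and A: "A \<subseteq> torus" and B: "B \<subseteq> torus"
  shows "\<exists>Q\<in>Pow (window_edges M W). window_matching x M A B c W Q"
proof -
  define Q where "Q = {e \<in> window_edges M W. (tadd c (lin x (fst e)), tadd c (lin x (fst e + snd e))) \<in> P}"
  have P_m: "is_matching x M A B P"
    using P unfolding is_perfect_matching_def by simp
  have "orbit_edges x c Q \<subseteq> P"
    unfolding orbit_edges_def Q_def by auto
  then have "is_matching x M A B (orbit_edges x c Q)"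
    by (rule is_matching_subset[OF P_m])
  moreover have "tadd c (lin x w) \<in> Domain (orbit_edges x c Q)"
    if w: "w \<in> W" "tadd c (lin x w) \<in> A" for w
  proof -
    obtain b where ab: "(tadd c (lin x w), b) \<in> P"
      using w(2) P unfolding is_perfect_matching_def by blast
    obtain z where z: "z \<in> int_box M" "tsub b (tadd c (lin x w)) = lin x z"
      using is_matching_edges[OF P_m ab] by (blast elim: VM_cases)
    have "b = tadd c (lin x (w + z))"
      using orbit_edge_fwd[OF z(2) refl] is_matching_edges[OF P_m ab] B by blast
    then have "(w, z) \<in> Q"
      using ab w(1) z(1) unfolding Q_def window_edges_def by simp
    then show ?thesis
      unfolding orbit_edges_def by force
  qed
  moreover have "tadd c (lin x w) \<in> Range (orbit_edges x c Q)"
    if w: "w \<in> W" "tadd c (lin x w) \<in> B" for w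
  proof -
    obtain a where ab: "(a, tadd c (lin x w)) \<in> P"
      using w(2) P unfolding is_perfect_matching_def by blast
    obtain z where z: "z \<in> int_box M" "tsub (tadd c (lin x w)) a = lin x z"
      using is_matching_edges[OF P_m ab] by (blast elim: VM_cases)
    have "a = tadd c (lin x (w - z))"
      using orbit_edge_bwd[OF z(2) refl] is_matching_edges[OF P_m ab] A by blast
    then have "(w - z, z) \<in> Q"
      using ab w(1) z(1) unfolding Q_def window_edges_def by force
    then show ?thesis
      unfolding orbit_edges_def by force
  qed
  ultimately show ?thesis
    unfolding window_matching_def Q_def by blast
qed

lemma matching_off_orbit:
  assumes P0: "is_perfect_matching x M A0 B0 P0" and "A0 \<subseteq> torus" "B0 \<subseteq> torus"
    and removed: "A0 - A \<subseteq> orbit x c" "B0 - B \<subseteq> orbit x c"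
  shows "is_matching x M A B {e \<in> P0. fst e \<notin> orbit x c}"
    and "(a, b) \<in> {e \<in> P0. fst e \<notin> orbit x c} \<Longrightarrow> b \<notin> orbit x c"
    and "A0 - orbit x c \<subseteq> Domain {e \<in> P0. fst e \<notin> orbit x c}"
    and "B0 - orbit x c \<subseteq> Range {e \<in> P0. fst e \<notin> orbit x c}"
proof -
  let ?N = "{e \<in> P0. fst e \<notin> orbit x c}"
  have P0_m: "is_matching x M A0 B0 P0" and "Domain P0 = A0" "Range P0 = B0"
    using P0 unfolding is_perfect_matching_def by simp_all
  have off: "a \<notin> orbit x c \<longleftrightarrow> b \<notin> orbit x c" if "(a, b) \<in> P0" for a b
    using orbit_edge_iff is_matching_edges[OF P0_m that] assms(2,3) by blast
  then show "b \<notin> orbit x c" if "(a, b) \<in> ?N" for a b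
    using that by auto
  have "?N \<subseteq> edges x M A B"
    using is_matching_edges[OF P0_m] off removed unfolding edges_def by fastforce
  then show "is_matching x M A B ?N"
    using is_matching_subset[OF P0_m, of ?N] unfolding is_matching_def by blast
  show "A0 - orbit x c \<subseteq> Domain ?N"
    using \<open>Domain P0 = A0\<close> by force
  show "B0 - orbit x c \<subseteq> Range ?N"
    using \<open>Range P0 = B0\<close> off by force
qed

text \<open>If only finitely many points of an orbit are removed from a perfectly matchable pair
  \<open>(A0, B0)\<close>, matchings along the orbit covering every finite window combine, with the old edges off
  the orbit, into finite coverings, hence into a perfect matching by compactness.\<close>

lemma perfect_matching_of_window_matchings:
  fixes x :: "'d::finite \<Rightarrow> real^'k"
  assumes free: "free_vecs x" and P0: "is_perfect_matching x M A0 B0 P0"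
    and "A0 \<subseteq> torus" "B0 \<subseteq> torus" "A \<subseteq> A0" "B \<subseteq> B0"
    and removed: "A0 - A \<subseteq> orbit x c" "B0 - B \<subseteq> orbit x c"
    and windows: "\<And>W. finite W \<Longrightarrow> \<exists>Q. window_matching x M A B c W Q"
  shows "\<exists>P. is_perfect_matching x M A B P"
proof (rule is_perfect_matching_if_finite_coverings)
  show "A \<subseteq> torus" "B \<subseteq> torus"
    using assms(3-6) by auto
  fix FA FB
  assume FA: "finite FA" "FA \<subseteq> A" and FB: "finite FB" "FB \<subseteq> B"
  define W where "W = (\<lambda>w. tadd c (lin x w)) -` (FA \<union> FB)"
  have "finite W"
    unfolding W_def using FA(1) FB(1) free by (intro finite_vimageI) (simp_all add: inj_on_def)
  then obtain Q where Q: "window_matching x M A B c W Q"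
    using windows by blast
  define N1 where "N1 = orbit_edges x c Q"
  define N2 where "N2 = {e \<in> P0. fst e \<notin> orbit x c}"
  note N2 = matching_off_orbit[OF P0 assms(3,4) removed, folded N2_def]
  have N1_orbit: "a \<in> orbit x c \<and> b \<in> orbit x c" if "(a, b) \<in> N1" for a b
    using that unfolding N1_def orbit_edges_def orbit_def by auto
  have "is_matching x M A B N1"
    using Q unfolding window_matching_def N1_def by blast
  then have "is_matching x M A B (N1 \<union> N2)"
  proof (rule is_matching_Un[OF _ N2(1)])
    show "a \<noteq> a' \<and> b \<noteq> b'" if "(a, b) \<in> N1" "(a', b') \<in> N2" for a b a' b'
      using N1_orbit[OF that(1)] N2(2)[OF that(2)] that(2) unfolding N2_def by auto
  qed
  moreover have "FA \<subseteq> Domain (N1 \<union> N2)"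
  proof
    fix a
    assume a: "a \<in> FA"
    show "a \<in> Domain (N1 \<union> N2)"
    proof (cases "a \<in> orbit x c")
      case True
      then show ?thesis
        using Q a FA(2) unfolding window_matching_def N1_def orbit_def W_def by auto
    next
      case False
      then have "a \<in> A0 - orbit x c"
        using a FA(2) assms(5) by blast
      then show ?thesis
        using N2(3) by blast
    qed
  qed
  moreover have "FB \<subseteq> Range (N1 \<union> N2)"
  proof
    fix b
    assume b: "b \<in> FB"
    show "b \<in> Range (N1 \<union> N2)"
    proof (cases "b \<in> orbit x c")
      case True
      then show ?thesis
        using Q b FB(2) unfolding window_matching_def N1_def orbit_def W_def by auto
    next
      case False
      then have "b \<in> B0 - orbit x c"
        using b FB(2) assms(6) by blast
      then show ?thesis
        using N2(4) by blast
    qed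
  qed
  ultimately show "\<exists>N. is_matching x M A B N \<and> FA \<subseteq> Domain N \<and> FB \<subseteq> Range N"
    by blast
qed

lemma bm_pred_punctured_perfect_matching:
  fixes x :: "'d::finite \<Rightarrow> real^'k"
  assumes free: "free_vecs x"
    and A: "baire_measurable_in torus_top A" and B: "baire_measurable_in torus_top B"
    and P: "is_perfect_matching x M A B P"
  shows "bm_pred (\<lambda>c. \<exists>R. is_perfect_matching x M (A - {tadd c (lin x p)}) (B - {tadd c (lin x q)}) R)"
proof (rule bm_pred_cong[OF _ bm_pred_window_matchings[OF free A B]])
  fix c
  let ?A = "A - {tadd c (lin x p)}" and ?B = "B - {tadd c (lin x q)}"
  have "A \<subseteq> torus" "B \<subseteq> torus"
    using A B by (simp_all add: baire_measurable_in_torus_subset)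
  show "(\<forall>W\<in>{W. finite W}. \<exists>Q\<in>Pow (window_edges M W). window_matching x M ?A ?B c W Q) \<longleftrightarrow>
    (\<exists>R. is_perfect_matching x M ?A ?B R)"
  proof
    assume windows: "\<forall>W\<in>{W. finite W}. \<exists>Q\<in>Pow (window_edges M W). window_matching x M ?A ?B c W Q"
    show "\<exists>R. is_perfect_matching x M ?A ?B R"
    proof (rule perfect_matching_of_window_matchings[OF free P])
      show "A - ?A \<subseteq> orbit x c" "B - ?B \<subseteq> orbit x c"
        by (auto simp: orbit_def)
      show "\<exists>Q. window_matching x M ?A ?B c W Q" if "finite W" for W
        using windows that by blast
    qed (use \<open>A \<subseteq> torus\<close> \<open>B \<subseteq> torus\<close> in auto)
  next
    assume "\<exists>R. is_perfect_matching x M ?A ?B R"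
    then obtain R where "is_perfect_matching x M ?A ?B R"
      by blast
    then show "\<forall>W\<in>{W. finite W}. \<exists>Q\<in>Pow (window_edges M W). window_matching x M ?A ?B c W Q"
      using window_matching_of_perfect_matching \<open>A \<subseteq> torus\<close> \<open>B \<subseteq> torus\<close> by blast
  qed
qed

section \<open>One step of the construction\<close>

locale one_sided_step =
  fixes x :: "'d::finite \<Rightarrow> real^'k" and M :: nat
    and A B Ai :: "(real^'k) set" and M0 P :: "((real^'k) \<times> (real^'k)) set"
  assumes free: "free_vecs x"
    and A_bm: "baire_measurable_in torus_top A" and B_bm: "baire_measurable_in torus_top B"
    and Ai_sub: "Ai \<subseteq> A" and Ai_bm: "baire_measurable_in torus_top Ai"
    and M0_bm: "baire_matching x M M0"
    and P: "is_perfect_matching x M A B P" and M0_sub: "M0 \<subseteq> P"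
begin

definition A0 where "A0 = A - Domain M0"
definition B0 where "B0 = B - Range M0"

text \<open>By \<open>extendable_insert\<close>, an admissible label \<open>z\<close> at \<open>a\<close> is one for which \<open>(a, a + z)\<close> can
  be added to \<open>M0\<close> keeping it extendable.\<close>

definition admissible_label :: "int^'d \<Rightarrow> real^'k \<Rightarrow> bool" where
  "admissible_label z a \<longleftrightarrow> tadd a (lin x z) \<in> B0 \<and>
     (\<exists>R. is_perfect_matching x M (A0 - {a}) (B0 - {tadd a (lin x z)}) R)"

definition labels :: "(int^'d) list" where
  "labels = (SOME zs. set zs = int_box M)"

definition first_admissible :: "nat \<Rightarrow> (real^'k) set" where
  "first_admissible i = {a \<in> Ai - Domain M0. admissible_label (labels ! i) a \<and> (\<forall>j<i. \<not> admissible_label (labels ! j) a)}"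

definition new_edges :: "((real^'k) \<times> (real^'k)) set" where
  "new_edges = {(a, tadd a (lin x (labels ! i))) | a i. i < length labels \<and> a \<in> first_admissible i}"

lemma set_labels: "set labels = int_box M"
  unfolding labels_def using finite_list[OF finite_int_box] by (rule someI_ex)

lemma A_torus: "A \<subseteq> torus" and B_torus: "B \<subseteq> torus"
  using A_bm B_bm by (simp_all add: baire_measurable_in_torus_subset)

lemma M0_matching: "is_matching x M A B M0"
  using P M0_sub is_matching_subset unfolding is_perfect_matching_def by blast

lemma perfect_matching_A0_B0: "is_perfect_matching x M A0 B0 (P - M0)"
  unfolding A0_def B0_def by (rule is_perfect_matching_Diff[OF P M0_sub])

lemma baire_measurable_A0: "baire_measurable_in torus_top A0"
  and baire_measurable_B0: "baire_measurable_in torus_top B0"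
proof -
  have "baire_measurable_in torus_top (Domain M0)"
    by (rule baire_measurable_Domain[OF M0_bm M0_matching A_torus])
  moreover have "baire_measurable_in torus_top (Domain (converse M0))"
    using baire_matching_converse[OF free M0_bm M0_matching A_torus B_torus]
      is_matching_converse[OF M0_matching] B_torus
    by (rule baire_measurable_Domain)
  ultimately have "bm_pred (\<lambda>c. c \<in> A \<and> \<not> c \<in> Domain M0)" "bm_pred (\<lambda>c. c \<in> B \<and> \<not> c \<in> Range M0)"
    by (auto intro!: bm_pred_conj bm_pred_not bm_pred_mem A_bm B_bm)
  then have "bm_pred (\<lambda>c. c \<in> A0)" "bm_pred (\<lambda>c. c \<in> B0)"
    unfolding A0_def B0_def by simp_all
  moreover have "A0 \<subseteq> torus" "B0 \<subseteq> torus"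
    unfolding A0_def B0_def using A_torus B_torus by auto
  ultimately show "baire_measurable_in torus_top A0" "baire_measurable_in torus_top B0"
    by (simp_all add: bm_pred_iff_baire_measurable)
qed

lemma bm_pred_admissible_label: "bm_pred (admissible_label z)"
proof -
  have "bm_pred (\<lambda>c. tadd c (lin x z) \<in> B0 \<and>
      (\<exists>R. is_perfect_matching x M (A0 - {tadd c (lin x 0)}) (B0 - {tadd c (lin x z)}) R))"
    by (intro bm_pred_conj bm_pred_tadd_mem baire_measurable_B0 bm_pred_punctured_perfect_matching[OF
        free baire_measurable_A0 baire_measurable_B0 perfect_matching_A0_B0])
  then show ?thesis
    unfolding admissible_label_def by (rule bm_pred_cong[rotated]) simp
qed

lemma first_admissible_unique: "a \<in> first_admissible i \<Longrightarrow> a \<in> first_admissible j \<Longrightarrow> i = j"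
  unfolding first_admissible_def by (metis (no_types, lifting) linorder_neqE_nat mem_Collect_eq)

lemma admissible_label_exists:
  assumes "a \<in> A0" shows "\<exists>z\<in>int_box M. admissible_label z a"
proof -
  obtain b where ab: "(a, b) \<in> P"
    using assms P unfolding A0_def is_perfect_matching_def by blast
  have P_m: "is_matching x M A B P"
    using P unfolding is_perfect_matching_def by simp
  obtain z where z: "z \<in> int_box M" "tsub b a = lin x z"
    using is_matching_edges[OF P_m ab] by (blast elim: VM_cases)
  have b: "b = tadd a (lin x z)"
    using tadd_lin_edge[OF z(2)] is_matching_edges[OF P_m ab] B_torus by blast
  have "b \<notin> Range M0"
    using assms ab M0_sub is_matching_unique_left[OF P_m ab] unfolding A0_def by blast
  then have "b \<in> B0"
    using is_matching_edges[OF P_m ab] unfolding B0_def by blast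
  have "is_perfect_matching x M (A - Domain (insert (a, b) M0)) (B - Range (insert (a, b) M0))
      (P - insert (a, b) M0)"
    using ab M0_sub by (intro is_perfect_matching_Diff[OF P]) simp
  moreover have "A - Domain (insert (a, b) M0) = A0 - {a}" "B - Range (insert (a, b) M0) = B0 - {b}"
    unfolding A0_def B0_def by auto
  ultimately have "admissible_label z a"
    unfolding admissible_label_def using b \<open>b \<in> B0\<close> by auto
  then show ?thesis
    using z(1) by blast
qed

lemma first_admissible_exists:
  assumes "a \<in> Ai - Domain M0" shows "\<exists>i<length labels. a \<in> first_admissible i"
proof -
  obtain z where "z \<in> int_box M" "admissible_label z a"
    using admissible_label_exists assms Ai_sub unfolding A0_def by blast
  then obtain k where k: "k < length labels" "admissible_label (labels ! k) a"
    using set_labels by (metis in_set_conv_nth)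
  define i where "i = (LEAST i. admissible_label (labels ! i) a)"
  have "admissible_label (labels ! i) a" "i \<le> k"
    unfolding i_def using k(2) by (auto intro: LeastI Least_le)
  moreover have "\<forall>j<i. \<not> admissible_label (labels ! j) a"
    unfolding i_def using not_less_Least by blast
  ultimately show ?thesis
    using assms k(1) unfolding first_admissible_def by (intro exI[of _ i]) auto
qed

lemma new_edgesE:
  assumes "(a, b) \<in> new_edges"
  obtains i where "i < length labels" "a \<in> first_admissible i" "b = tadd a (lin x (labels ! i))"
  using assms unfolding new_edges_def by blast

lemma new_edge_props:
  assumes "i < length labels" "a \<in> first_admissible i" "b = tadd a (lin x (labels ! i))"
  shows "a \<in> Ai \<and> a \<in> A0 \<and> b \<in> B0 \<and> tsub b a = lin x (labels ! i) \<and> labels ! i \<in> int_box M \<and>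
    (\<exists>R. is_perfect_matching x M (A0 - {a}) (B0 - {b}) R)"
  using assms Ai_sub nth_mem[OF assms(1)] set_labels
  unfolding first_admissible_def admissible_label_def A0_def by (auto simp: tsub_tadd)

lemma extendable_insert_new_edge:
  assumes "e \<in> new_edges" shows "extendable x M A B (insert e M0)"
proof -
  obtain a b where e: "e = (a, b)" "(a, b) \<in> new_edges"
    using assms by (cases e) blast
  obtain i where i: "i < length labels" "a \<in> first_admissible i" "b = tadd a (lin x (labels ! i))"
    using e(2) by (rule new_edgesE)
  then obtain R where "is_perfect_matching x M (A0 - {a}) (B0 - {b}) R"
    using new_edge_props by blast
  moreover have "a \<in> A - Domain M0" "b \<in> B - Range M0" "tsub b a \<in> VM x M"
    using new_edge_props[OF i] unfolding A0_def B0_def VM_eq by auto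
  ultimately show ?thesis
    unfolding e(1) A0_def B0_def by (intro extendable_insert[OF M0_matching])
qed

lemma Ai_subset_Domain: "Ai \<subseteq> Domain (M0 \<union> new_edges)"
proof
  fix a
  assume "a \<in> Ai"
  show "a \<in> Domain (M0 \<union> new_edges)"
  proof (cases "a \<in> Domain M0")
    case False
    then obtain i where "i < length labels" "a \<in> first_admissible i"
      using first_admissible_exists \<open>a \<in> Ai\<close> by blast
    then have "(a, tadd a (lin x (labels ! i))) \<in> new_edges"
      unfolding new_edges_def by blast
    then show ?thesis
      by blast
  qed blast
qed

lemma baire_matching_new_edges: "baire_matching x M (M0 \<union> new_edges)"
  unfolding baire_matching_def
proof
  fix v
  assume v: "v \<in> VM x M"
  let ?S = "{a. \<exists>b. (a, b) \<in> M0 \<union> new_edges \<and> tsub b a = v}"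
  let ?D = "{a. \<exists>b. (a, b) \<in> M0 \<and> tsub b a = v}"
  have new_label: "(a, b) \<in> new_edges \<and> tsub b a = v \<longleftrightarrow>
      (\<exists>i<length labels. a \<in> first_admissible i \<and> b = tadd a (lin x (labels ! i)) \<and> lin x (labels ! i) = v)"
    for a b
    using new_edge_props by (auto simp: new_edges_def tsub_tadd)
  have S_iff: "a \<in> ?S \<longleftrightarrow> a \<in> ?D \<or> (\<exists>i\<in>{..<length labels}.
      (a \<in> Ai \<and> \<not> a \<in> Domain M0 \<and> admissible_label (labels ! i) a \<and> (\<forall>j\<in>{..<i}. \<not> admissible_label (labels ! j) a)) \<and>
      lin x (labels ! i) = v)" for a
    unfolding Un_iff conj_disj_distribR ex_disj_distrib new_label by (auto simp: first_admissible_def)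
  have "bm_pred (\<lambda>a. a \<in> ?D \<or> (\<exists>i\<in>{..<length labels}.
      (a \<in> Ai \<and> \<not> a \<in> Domain M0 \<and> admissible_label (labels ! i) a \<and> (\<forall>j\<in>{..<i}. \<not> admissible_label (labels ! j) a)) \<and>
      lin x (labels ! i) = v))"
    using M0_bm v unfolding baire_matching_def
    by (intro bm_pred_disj bm_pred_mem bm_pred_Bex bm_pred_conj bm_pred_not bm_pred_Ball
        Ai_bm bm_pred_admissible_label bm_pred_const baire_measurable_Domain[OF M0_bm M0_matching A_torus]) auto
  then have "bm_pred (\<lambda>a. a \<in> ?S)"
    by (rule bm_pred_cong[rotated]) (simp only: S_iff)
  moreover have "?S \<subseteq> torus"
  proof
    fix a
    assume "a \<in> ?S"
    then have "a \<in> Domain M0 \<or> a \<in> Domain new_edges"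
      by blast
    then show "a \<in> torus"
      using is_matching_edges[OF M0_matching] A_torus Ai_sub
      by (auto simp: new_edges_def first_admissible_def)
  qed
  ultimately show "baire_measurable_in torus_top ?S"
    using bm_pred_iff_baire_measurable by blast
qed

context
  fixes r :: nat
  assumes Ai_sparse: "sparse x (r + 4 * M) Ai"
begin

lemma mem_section_set: "tadd u (lin x n) \<in> Ai \<Longrightarrow> n \<in> section_set x Ai u"
  unfolding section_set_def by simp

text \<open>Two new edges ending at the same point would start at two points of \<open>Ai\<close> on one orbit at
  distance at most \<open>2 M\<close>, which sparseness forbids.\<close>

lemma new_edges_unique_left:
  assumes "(a, b) \<in> new_edges" "(a', b) \<in> new_edges" shows "a' = a"
proof (rule ccontr)
  assume "a' \<noteq> a"
  obtain i where i: "i < length labels" "a \<in> first_admissible i" "b = tadd a (lin x (labels ! i))"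
    using assms(1) by (rule new_edgesE)
  obtain i' where i': "i' < length labels" "a' \<in> first_admissible i'" "b = tadd a' (lin x (labels ! i'))"
    using assms(2) by (rule new_edgesE)
  let ?z = "labels ! i" and ?z' = "labels ! i'"
  have a: "a \<in> Ai" "a \<in> torus" and a': "a' \<in> Ai" "a' \<in> torus"
    using new_edge_props[OF i] new_edge_props[OF i'] Ai_sub A_torus by auto
  have "tsub b a' = lin x ?z'"
    using new_edge_props[OF i'] by blast
  then have a'_eq: "a' = tadd a (lin x (?z - ?z'))"
    by (rule orbit_edge_bwd[OF _ i(3) a'(2)])
  have "0 \<in> section_set x Ai a" "?z - ?z' \<in> section_set x Ai a"
    using a a' a'_eq by (simp_all add: mem_section_set)
  moreover have "0 \<noteq> ?z - ?z'"
    using a'_eq \<open>a' \<noteq> a\<close> a(2) by auto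
  ultimately have "int (r + 4 * M) < linf_dist 0 (?z - ?z')"
    using Ai_sparse a(2) unfolding sparse_def by blast
  moreover have "linf_dist 0 (?z - ?z') \<le> int (2 * M)"
    unfolding linf_dist_le_iff
  proof
    fix j
    have "\<bar>?z $ j\<bar> \<le> int M" "\<bar>?z' $ j\<bar> \<le> int M"
      using new_edge_props[OF i] new_edge_props[OF i'] unfolding int_box_def by blast+
    then show "\<bar>0 $ j - (?z - ?z') $ j\<bar> \<le> int (2 * M)"
      by simp
  qed
  ultimately show False
    by simp
qed

lemma is_matching_new_edges: "is_matching x M A B (M0 \<union> new_edges)"
proof (rule is_matching_Un[OF M0_matching])
  have "new_edges \<subseteq> edges x M A B"
    using new_edge_props unfolding new_edges_def edges_def A0_def B0_def VM_eq by fastforce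
  moreover have "a = a' \<longleftrightarrow> b = b'" if "(a, b) \<in> new_edges" "(a', b') \<in> new_edges" for a b a' b'
    using that new_edges_unique_left first_admissible_unique unfolding new_edges_def by blast
  ultimately show "is_matching x M A B new_edges"
    unfolding is_matching_def by blast
  show "a \<noteq> a' \<and> b \<noteq> b'" if "(a, b) \<in> M0" "(a', b') \<in> new_edges" for a b a' b'
    using that new_edge_props unfolding new_edges_def A0_def B0_def by blast
qed

lemma new_edges_separated:
  assumes u: "u \<in> torus" and p: "p \<in> edge_section x new_edges u" and q: "q \<in> edge_section x new_edges u"
    and "p \<noteq> q" and s: "s \<in> {fst p, snd p}" and t: "t \<in> {fst q, snd q}"
  shows "int (r + 2 * M) < linf_dist s t"
proof -
  have start: "\<exists>i<length labels. tadd u (lin x (fst e)) \<in> first_admissible i \<and> snd e = fst e + labels ! i"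
    if "e \<in> edge_section x new_edges u" for e
  proof -
    have "(tadd u (lin x (fst e)), tadd u (lin x (snd e))) \<in> new_edges"
      using that unfolding edge_section_def by (cases e) simp
    then obtain i where i: "i < length labels" "tadd u (lin x (fst e)) \<in> first_admissible i"
      "tadd u (lin x (snd e)) = tadd (tadd u (lin x (fst e))) (lin x (labels ! i))"
      by (rule new_edgesE)
    then show ?thesis
      using free by auto
  qed
  obtain i where i: "i < length labels" "tadd u (lin x (fst p)) \<in> first_admissible i" "snd p = fst p + labels ! i"
    using start[OF p] by blast
  obtain i' where i': "i' < length labels" "tadd u (lin x (fst q)) \<in> first_admissible i'"
    "snd q = fst q + labels ! i'"
    using start[OF q] by blast
  have "fst p \<noteq> fst q"
    using first_admissible_unique i i' \<open>p \<noteq> q\<close> by (metis prod.expand)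
  moreover have "fst p \<in> section_set x Ai u" "fst q \<in> section_set x Ai u"
    using i(2) i'(2) unfolding first_admissible_def by (auto intro: mem_section_set)
  ultimately have "int M + int M + int (r + 2 * M) < linf_dist (fst p) (fst q)"
    using Ai_sparse u unfolding sparse_def by fastforce
  moreover have "linf_dist (fst e) n \<le> int M"
    if "n \<in> {fst e, snd e}" "snd e = fst e + labels ! k" "k < length labels" "tadd u (lin x (fst e)) \<in> first_admissible k"
    for e n k
    using that linf_dist_add_int_box[of "labels ! k" M "fst e"] new_edge_props[OF that(3,4) refl]
    by (auto simp: linf_dist_le_iff)
  then have "linf_dist (fst p) s \<le> int M" "linf_dist t (fst q) \<le> int M"
    using s t i i' linf_dist_commute by metis+
  ultimately show ?thesis
    by (rule linf_dist_gt_shrink[rotated 2])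
qed

end

end

definition admissible_extension :: "('d::finite \<Rightarrow> real^'k) \<Rightarrow> nat \<Rightarrow> (real^'k) set \<Rightarrow> (real^'k) set
    \<Rightarrow> nat \<Rightarrow> ((real^'k) \<times> (real^'k)) set \<Rightarrow> ((real^'k) \<times> (real^'k)) set \<Rightarrow> bool" where
  "admissible_extension x M A B r M0 M1 \<longleftrightarrow>
     M0 \<subseteq> M1 \<and> is_matching x M A B M1 \<and> baire_matching x M M1 \<and>
     (\<forall>u\<in>torus. \<forall>p\<in>edge_section x (M1 - M0) u. \<forall>q\<in>edge_section x (M1 - M0) u.
        p \<noteq> q \<longrightarrow> (\<forall>s\<in>{fst p, snd p}. \<forall>t\<in>{fst q, snd q}. linf_dist s t > int (r + 2 * M))) \<and>
     (\<forall>e\<in>M1 - M0. extendable x M A B (insert e M0))"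

lemma admissible_extension_covering_Domain:
  fixes x :: "'d::finite \<Rightarrow> real^'k"
  assumes "free_vecs x"
    and "baire_measurable_in torus_top A" "baire_measurable_in torus_top B"
    and "Ai \<subseteq> A" "baire_measurable_in torus_top Ai" "sparse x (r + 4 * M) Ai"
    and "baire_matching x M M0" "extendable x M A B M0"
  shows "\<exists>M1. admissible_extension x M A B r M0 M1 \<and> Ai \<subseteq> Domain M1"
proof -
  obtain P where "is_perfect_matching x M A B P" "M0 \<subseteq> P"
    using assms(8) unfolding extendable_def by blast
  then interpret one_sided_step x M A B Ai M0 P
    using assms(1-7) by unfold_locales
  have "M0 \<union> new_edges - M0 = new_edges"
    using new_edge_props unfolding new_edges_def A0_def by blast
  then show ?thesis
    unfolding admissible_extension_def
    using is_matching_new_edges[OF assms(6)] baire_matching_new_edges Ai_subset_Domain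
      new_edges_separated[OF assms(6)] extendable_insert_new_edge
    by (intro exI[of _ "M0 \<union> new_edges"]) auto
qed

lemma admissible_extension_converse:
  fixes x :: "'d::finite \<Rightarrow> real^'k"
  assumes free: "free_vecs x" and "A \<subseteq> torus" "B \<subseteq> torus"
    and ext: "admissible_extension x M B A r (converse M0) M1"
  shows "admissible_extension x M A B r M0 (converse M1)"
proof -
  have M1: "is_matching x M B A M1" and "converse M0 \<subseteq> M1" and "baire_matching x M M1"
    and sep: "\<forall>u\<in>torus. \<forall>p\<in>edge_section x (M1 - converse M0) u. \<forall>q\<in>edge_section x (M1 - converse M0) u.
        p \<noteq> q \<longrightarrow> (\<forall>s\<in>{fst p, snd p}. \<forall>t\<in>{fst q, snd q}. linf_dist s t > int (r + 2 * M))"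
    and ext_new: "\<forall>e\<in>M1 - converse M0. extendable x M B A (insert e (converse M0))"
    using ext unfolding admissible_extension_def by simp_all
  have diff: "converse M1 - M0 = converse (M1 - converse M0)"
    by blast
  have "extendable x M A B (insert (a, b) M0)" if "(a, b) \<in> converse M1 - M0" for a b
  proof -
    have "(b, a) \<in> M1 - converse M0"
      using that by simp
    then have "extendable x M B A (insert (b, a) (converse M0))"
      using ext_new by blast
    moreover have "insert (b, a) (converse M0) = converse (insert (a, b) M0)"
      by auto
    ultimately have "extendable x M B A (converse (insert (a, b) M0))"
      by simp
    then show ?thesis
      using extendable_converse by fastforce
  qed
  moreover have "int (r + 2 * M) < linf_dist s t"
    if u: "u \<in> torus" and pq_sec: "p \<in> edge_section x (converse M1 - M0) u" "q \<in> edge_section x (converse M1 - M0) u"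
      and pq: "p \<noteq> q" "s \<in> {fst p, snd p}" "t \<in> {fst q, snd q}" for u p q s t
  proof -
    obtain p' q' where p': "p' \<in> edge_section x (M1 - converse M0) u" "p = (snd p', fst p')"
      and q': "q' \<in> edge_section x (M1 - converse M0) u" "q = (snd q', fst q')"
      using pq_sec unfolding diff edge_section_converse by auto
    have "p' \<noteq> q'" "s \<in> {fst p', snd p'}" "t \<in> {fst q', snd q'}"
      using pq p'(2) q'(2) by auto
    then show ?thesis
      using sep u p'(1) q'(1) by blast
  qed
  ultimately show ?thesis
    using \<open>converse M0 \<subseteq> M1\<close> is_matching_converse[OF M1]
      baire_matching_converse[OF free \<open>baire_matching x M M1\<close> M1 assms(3,2)]
    unfolding admissible_extension_def by auto
qed

lemma admissible_extension_covering_Range: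
  fixes x :: "'d::finite \<Rightarrow> real^'k"
  assumes free: "free_vecs x"
    and A_bm: "baire_measurable_in torus_top A" and B_bm: "baire_measurable_in torus_top B"
    and "Bi \<subseteq> B" "baire_measurable_in torus_top Bi" "sparse x (r + 4 * M) Bi"
    and M0_bm: "baire_matching x M M0" and M0_ext: "extendable x M A B M0"
  shows "\<exists>M1. admissible_extension x M A B r M0 M1 \<and> Bi \<subseteq> Range M1"
proof -
  have "A \<subseteq> torus" "B \<subseteq> torus"
    using A_bm B_bm by (simp_all add: baire_measurable_in_torus_subset)
  moreover have "baire_matching x M (converse M0)"
    using M0_ext \<open>A \<subseteq> torus\<close> \<open>B \<subseteq> torus\<close> unfolding extendable_def
    by (blast intro: baire_matching_converse[OF free M0_bm])
  ultimately obtain M1 where "admissible_extension x M B A r (converse M0) M1" "Bi \<subseteq> Domain M1"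
    using admissible_extension_covering_Domain[OF free B_bm A_bm assms(4-6) _ extendable_converse[OF M0_ext]]
    by blast
  then have "admissible_extension x M A B r M0 (converse M1)" "Bi \<subseteq> Range (converse M1)"
    using admissible_extension_converse[OF free \<open>A \<subseteq> torus\<close> \<open>B \<subseteq> torus\<close>] by simp_all
  then show ?thesis
    by blast
qed

theorem lemma5p1:
  fixes x :: "'d::finite \<Rightarrow> real^'k"
    and M r :: nat
    and A B Ai Bi :: "(real^'k) set"
    and M0 :: "((real^'k) \<times> (real^'k)) set"
  assumes x_torus: "\<forall>j. x j \<in> torus"
    and x_free: "free_vecs x"
    and M_pos: "M \<ge> 1"
    and A_bm: "baire_measurable_in torus_top A"
    and B_bm: "baire_measurable_in torus_top B"
    and Ai_sub: "Ai \<subseteq> A" and Bi_sub: "Bi \<subseteq> B"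
    and Ai_bm: "baire_measurable_in torus_top Ai"
    and Bi_bm: "baire_measurable_in torus_top Bi"
    and one_empty: "Ai = {} \<or> Bi = {}"
    and sparse: "sparse x (r + 4 * M) (Ai \<union> Bi)"
    and M0_bm: "baire_matching x M M0"
    and M0_ext: "extendable x M A B M0"
  shows "\<exists>M1. M0 \<subseteq> M1 \<and> is_matching x M A B M1 \<and> baire_matching x M M1
    \<and> Ai \<subseteq> Domain M1 \<and> Bi \<subseteq> Range M1
    \<and> (\<forall>u\<in>torus. \<forall>p\<in>edge_section x (M1 - M0) u. \<forall>q\<in>edge_section x (M1 - M0) u.
          p \<noteq> q \<longrightarrow> (\<forall>s\<in>{fst p, snd p}. \<forall>t\<in>{fst q, snd q}. linf_dist s t > int (r + 2 * M)))
    \<and> (\<forall>e\<in>M1 - M0. extendable x M A B (insert e M0))"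
proof -
  have "\<exists>M1. admissible_extension x M A B r M0 M1 \<and> Ai \<subseteq> Domain M1 \<and> Bi \<subseteq> Range M1"
    using one_empty
  proof
    assume "Ai = {}"
    then show ?thesis
      using sparse admissible_extension_covering_Range[OF x_free A_bm B_bm Bi_sub Bi_bm _ M0_bm M0_ext]
      by simp
  next
    assume "Bi = {}"
    then show ?thesis
      using sparse admissible_extension_covering_Domain[OF x_free A_bm B_bm Ai_sub Ai_bm _ M0_bm M0_ext]
      by simp
  qed
  then obtain M1 where "admissible_extension x M A B r M0 M1" "Ai \<subseteq> Domain M1" "Bi \<subseteq> Range M1"
    by blast
  then show ?thesis
    unfolding admissible_extension_def by (intro exI[of _ M1]) (elim conjE; intro conjI; assumption)
qed

end
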